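(* Let $n,\ell,a\ge1$ with $na\le\ell$, and for $1\le p\le a$ let $\lambda_p:\mathbb T\to\mathbb T$ be continuous with $\lambda_p(1)=1$ and winding number $w(\lambda_p)\in\mathbb Z$. Let $\varphi:C(\mathbb T)\otimes M_n\to C(\mathbb T)\otimes M_\ell$ be the $*$-homomorphism $f\mapsto\mathrm{diag}(f\circ\lambda_1,\dots,f\circ\lambda_a,0_{\ell-na})$. Then for each $m\ge1$, under the identifications $F_m(C(\mathbb T)\otimes M_n)\cong V^m_n$ and $F_m(C(\mathbb T)\otimes M_\ell)\cong V^m_\ell$, the map $F_m(\varphi):V^m_n\to V^m_\ell$ is $(x,y)\mapsto(ax,by)$, where $b=\sum_{p=1}^a w(\lambda_p)$.
   Context: For a C*-algebra $A$ define $a\cdot b=a+b-ab$; $u\in A$ is a quasi-unitary if $u\cdot u^*=u^*\cdot u=0$, $\widehat{\mathcal U}(A)$ is the topological group of quasi-unitaries, and $F_m(A)=\pi_m(\widehat{\mathcal U}(A))\otimes\mathbb Q$ ($m\ge1$), a functor. $\mathcal U_n$ is the unitary group of $M_n(\mathbb C)$. $V^m_n:=\pi_m(\mathcal U_n)\otimes\mathbb Q\oplus\pi_{m+1}(\mathcal U_n)\otimes\mathbb Q$, whose elements are written as pairs $(x,y)$. The identification $F_m(C(\mathbb T)\otimes M_n)\cong V^m_n$ is the natural one coming from the split exact sequence $0\to C_*(\mathbb T,M_n)\to C(\mathbb T)\otimes M_n\xrightarrow{\mathrm{ev}_1}M_n\to0$ (split by constants), where $C_*(\mathbb T,M_n)=\{f:f(1)=0\}$,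 together with $F_m(M_n)\cong\pi_m(\mathcal U_n)\otimes\mathbb Q$ (via $u\mapsto1-u$) and $F_m(C_*(\mathbb T,M_n))\cong\pi_{m+1}(\mathcal U_n)\otimes\mathbb Q$ (suspension isomorphism). The pair $(a,b)$ is called the signature of $\varphi$. *)

theory Defs
  imports "HOL-Complex_Analysis.Complex_Analysis"
begin

text \<open>Complex k x k matrices, encoded as functions nat => nat => complex that vanish
  outside the index block {..<k} x {..<k}.\<close>
type_synonym cmat = "nat \<Rightarrow> nat \<Rightarrow> complex"

definition idm :: "nat \<Rightarrow> cmat" where
  "idm k = (\<lambda>i j. if i < k \<and> i = j then 1 else 0)"

definition mmult :: "nat \<Rightarrow> cmat \<Rightarrow> cmat \<Rightarrow> cmat" where
  "mmult k A B = (\<lambda>i j. if i < k \<and> j < k then (\<Sum>r<k. A i r * B r j) else 0)"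

definition madj :: "cmat \<Rightarrow> cmat" where
  "madj A = (\<lambda>i j. cnj (A j i))"

definition unitary_mat :: "nat \<Rightarrow> cmat \<Rightarrow> bool" where
  "unitary_mat k U \<longleftrightarrow> (\<forall>i j. \<not> (i < k \<and> j < k) \<longrightarrow> U i j = 0)
     \<and> mmult k U (madj U) = idm k \<and> mmult k (madj U) U = idm k"

fun mpow :: "nat \<Rightarrow> cmat \<Rightarrow> nat \<Rightarrow> cmat" where
  "mpow k A 0 = idm k"
| "mpow k A (Suc N) = mmult k A (mpow k A N)"

text \<open>Integer powers of unitaries (negative powers via the adjoint = inverse).\<close>
definition mzpow :: "nat \<Rightarrow> cmat \<Rightarrow> int \<Rightarrow> cmat" where
  "mzpow k A b = (if 0 \<le> b then mpow k A (nat b) else mpow k (madj A) (nat (- b)))"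

text \<open>Continuity of a matrix-valued map (entrywise = norm topology on M_k).\<close>
definition mcont :: "'x::topological_space set \<Rightarrow> ('x \<Rightarrow> cmat) \<Rightarrow> bool" where
  "mcont S F \<longleftrightarrow> (\<forall>i j. continuous_on S (\<lambda>x. F x i j))"

abbreviation circle :: "complex set" where
  "circle \<equiv> sphere 0 1"

text \<open>Corner inclusion U_k -> U_l, U |-> diag(U, 1_(l-k))
  (i.e. the inclusion M_k -> M_l, x |-> diag(x,0), on quasi-unitaries via u |-> 1-u).\<close>
definition corner :: "nat \<Rightarrow> nat \<Rightarrow> cmat \<Rightarrow> cmat" where
  "corner k l A = (\<lambda>i j. if i < k \<and> j < k then A i j else if i = j \<and> i < l then 1 else 0)"

definition pi_map :: "nat \<Rightarrow> 'v::euclidean_space \<Rightarrow> ('v \<Rightarrow> cmat) \<Rightarrow> bool" where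
  "pi_map k e f \<longleftrightarrow> mcont (sphere 0 1) f \<and> (\<forall>s\<in>sphere 0 1. unitary_mat k (f s)) \<and> f e = idm k"

definition pi_htp :: "nat \<Rightarrow> 'v::euclidean_space \<Rightarrow> ('v \<Rightarrow> cmat) \<Rightarrow> ('v \<Rightarrow> cmat) \<Rightarrow> bool" where
  "pi_htp k e f g \<longleftrightarrow> (\<exists>H :: real \<times> 'v \<Rightarrow> cmat.
      mcont ({0..1} \<times> sphere 0 1) H
      \<and> (\<forall>t\<in>{0..1}. \<forall>s\<in>sphere 0 1. unitary_mat k (H (t, s)))
      \<and> (\<forall>s\<in>sphere 0 1. H (0, s) = f s \<and> H (1, s) = g s)
      \<and> (\<forall>t\<in>{0..1}. H (t, e) = idm k))"

text \<open>[f] (x) 1 = [g] (x) 1 in pi_m(U_k) (x) Q  iff  N[f] = N[g] for some N > 0;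
  in a topological group N[f] is represented by the pointwise power f^N.\<close>
definition pi_rat_eq :: "nat \<Rightarrow> 'v::euclidean_space \<Rightarrow> ('v \<Rightarrow> cmat) \<Rightarrow> ('v \<Rightarrow> cmat) \<Rightarrow> bool" where
  "pi_rat_eq k e f g \<longleftrightarrow> (\<exists>N>0. pi_htp k e (\<lambda>s. mpow k (f s) N) (\<lambda>s. mpow k (g s) N))"

subsection \<open>Based maps S^m -> quasi-unitaries of C_*(T, M_k) and their rational classes\<close>

text \<open>Written on the unitary level u |-> 1 - u: maps G : S^m x T -> U_k with G(s,1) = 1
  and G(e,z) = 1, jointly continuous (= continuous into C(T,M_k) with sup norm).\<close>
definition cs_map :: "nat \<Rightarrow> 'v::euclidean_space \<Rightarrow> ('v \<times> complex \<Rightarrow> cmat) \<Rightarrow> bool" where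
  "cs_map k e G \<longleftrightarrow> mcont (sphere 0 1 \<times> circle) G
     \<and> (\<forall>s\<in>sphere 0 1. \<forall>z\<in>circle. unitary_mat k (G (s, z)))
     \<and> (\<forall>s\<in>sphere 0 1. G (s, 1) = idm k) \<and> (\<forall>z\<in>circle. G (e, z) = idm k)"

definition cs_htp :: "nat \<Rightarrow> 'v::euclidean_space \<Rightarrow> ('v \<times> complex \<Rightarrow> cmat) \<Rightarrow> ('v \<times> complex \<Rightarrow> cmat) \<Rightarrow> bool" where
  "cs_htp k e F G \<longleftrightarrow> (\<exists>H :: real \<times> 'v \<times> complex \<Rightarrow> cmat.
      mcont ({0..1} \<times> sphere 0 1 \<times> circle) H
      \<and> (\<forall>t\<in>{0..1}. \<forall>s\<in>sphere 0 1. \<forall>z\<in>circle. unitary_mat k (H (t, s, z)))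
      \<and> (\<forall>s\<in>sphere 0 1. \<forall>z\<in>circle. H (0, s, z) = F (s, z) \<and> H (1, s, z) = G (s, z))
      \<and> (\<forall>t\<in>{0..1}. \<forall>s\<in>sphere 0 1. H (t, s, 1) = idm k)
      \<and> (\<forall>t\<in>{0..1}. \<forall>z\<in>circle. H (t, e, z) = idm k))"

definition cs_rat_eq :: "nat \<Rightarrow> 'v::euclidean_space \<Rightarrow> ('v \<times> complex \<Rightarrow> cmat) \<Rightarrow> ('v \<times> complex \<Rightarrow> cmat) \<Rightarrow> bool" where
  "cs_rat_eq k e F G \<longleftrightarrow> (\<exists>N>0. cs_htp k e (\<lambda>x. mpow k (F x) N) (\<lambda>x. mpow k (G x) N))"

subsection \<open>Based maps S^m -> quasi-unitaries of C(T) (x) M_k (unitary level)\<close>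

definition ct_map :: "nat \<Rightarrow> 'v::euclidean_space \<Rightarrow> ('v \<times> complex \<Rightarrow> cmat) \<Rightarrow> bool" where
  "ct_map k e U \<longleftrightarrow> mcont (sphere 0 1 \<times> circle) U
     \<and> (\<forall>s\<in>sphere 0 1. \<forall>z\<in>circle. unitary_mat k (U (s, z)))
     \<and> (\<forall>z\<in>circle. U (e, z) = idm k)"

text \<open>Coordinates in V^m_k = pi_m(U_k)(x)Q (+) pi_m(Uhat(C_*(T,M_k)))(x)Q of the class of U,
  coming from the split exact sequence (split by constants): x = ev_1 U,
  y = U * (const (ev_1 U))^(-1)  (unitary-level product corresponds to the quasi-product).\<close>
definition xcoord :: "('v \<times> complex \<Rightarrow> cmat) \<Rightarrow> 'v \<Rightarrow> cmat" where
  "xcoord U = (\<lambda>s. U (s, 1))"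

definition ycoord :: "nat \<Rightarrow> ('v \<times> complex \<Rightarrow> cmat) \<Rightarrow> 'v \<times> complex \<Rightarrow> cmat" where
  "ycoord k U = (\<lambda>(s, z). mmult k (U (s, z)) (madj (U (s, 1))))"

text \<open>The *-homomorphism phi(f) = diag(f o lam_0, ..., f o lam_(a-1), 0_(l-na)),
  transported to the unitary level: U |-> 1 - phi(1 - U) = diag(U o lam_p, 1_(l-na)).\<close>
definition phi_u :: "nat \<Rightarrow> nat \<Rightarrow> nat \<Rightarrow> (nat \<Rightarrow> complex \<Rightarrow> complex)
    \<Rightarrow> ('v \<times> complex \<Rightarrow> cmat) \<Rightarrow> 'v \<times> complex \<Rightarrow> cmat" where
  "phi_u n l a lam U = (\<lambda>(s, z) i j.
     if i < n * a \<and> j < n * a \<and> i div n = j div n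
     then U (s, lam (i div n) z) (i mod n) (j mod n)
     else if i = j \<and> i < l then 1 else 0)"

definition wind :: "(complex \<Rightarrow> complex) \<Rightarrow> int" where
  "wind g = (THE k::int. winding_number (g \<circ> circlepath 0 1) 0 = of_int k)"

end

theory Submission
  imports Defs
begin

text \<open>
  Both coordinates
  are identified by explicit based homotopies, so the rational equalities hold with \<open>N = 1\<close>.

  A block diagonal matrix is the product of the matrices carrying a single one of its blocks, and
  the matrix carrying \<open>A\<close> in block \<open>p\<close> is conjugate to the corner embedding of \<open>A\<close> by the end
  point of a path of rotations exchanging block \<open>p\<close> with block \<open>0\<close>. Hence \<open>diag (A\<^sub>0, ..., A\<^sub>a\<^sub>-\<^sub>1)\<close>
  is homotopic to the product of the corners of the \<open>A\<^sub>p\<close>. At \<open>z = 1\<close> all blocks are \<open>U (s, 1)\<close>,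
  which gives \<open>a x\<close>.

  If \<open>y\<close> is the \<open>y\<close>-coordinate of \<open>U\<close>, then \<open>y \<circ> \<lambda>\<^sub>p\<close> is \<open>y\<close> reparametrised in the
  circle variable by a lift \<open>h\<^sub>p\<close> of \<open>\<lambda>\<^sub>p\<close> with \<open>h\<^sub>p 1 = w (\<lambda>\<^sub>p)\<close>. Products of
  reparametrisations of \<open>y\<close> behave like concatenations of loops, up to homotopy only the end
  point of the lift matters, and the lift \<open>t \<mapsto> b t\<close> gives \<open>y\<^sup>b\<close>. Hence the product of
  the \<open>y \<circ> \<lambda>\<^sub>p\<close> is homotopic to \<open>y\<^sup>b\<close>.
\<close>

section \<open>Matrix algebra\<close>

definition is_mat :: "nat \<Rightarrow> cmat \<Rightarrow> bool" where
  "is_mat k A \<longleftrightarrow> (\<forall>i j. \<not> (i < k \<and> j < k) \<longrightarrow> A i j = 0)"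

lemma is_mat_mmult [simp]: "is_mat k (mmult k A B)"
  by (simp add: is_mat_def mmult_def)

lemma is_mat_idm [simp]: "is_mat k (idm k)"
  by (simp add: is_mat_def idm_def)

lemma is_mat_madj: "is_mat k A \<Longrightarrow> is_mat k (madj A)"
  by (auto simp: is_mat_def madj_def)

lemma is_mat_mpow [simp]: "is_mat k (mpow k A N)"
  by (cases N) simp_all

lemma mmult_idm_left: "is_mat k A \<Longrightarrow> mmult k (idm k) A = A"
  by (auto simp: mmult_def idm_def is_mat_def fun_eq_iff mult_if_delta)

lemma mmult_idm_right: "is_mat k A \<Longrightarrow> mmult k A (idm k) = A"
  by (auto simp: mmult_def idm_def is_mat_def fun_eq_iff mult_if_delta
      mult.commute[of _ "if _ then _ else _"])

lemma mmult_assoc: "mmult k (mmult k A B) C = mmult k A (mmult k B C)"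
proof (intro ext)
  fix i j
  show "mmult k (mmult k A B) C i j = mmult k A (mmult k B C) i j"
  proof (cases "i < k \<and> j < k")
    case True
    have "mmult k (mmult k A B) C i j = (\<Sum>r<k. \<Sum>q<k. A i q * B q r * C r j)"
      using True by (simp add: mmult_def sum_distrib_right)
    also have "\<dots> = (\<Sum>q<k. \<Sum>r<k. A i q * B q r * C r j)"
      by (rule sum.swap)
    also have "\<dots> = mmult k A (mmult k B C) i j"
      using True by (simp add: mmult_def sum_distrib_left mult.assoc)
    finally show ?thesis .
  qed (auto simp: mmult_def)
qed

lemma madj_madj [simp]: "madj (madj A) = A"
  by (simp add: madj_def)

lemma madj_idm [simp]: "madj (idm k) = idm k"
  by (auto simp: madj_def idm_def fun_eq_iff)

lemma madj_mmult: "madj (mmult k A B) = mmult k (madj B) (madj A)"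
  by (auto simp: madj_def mmult_def fun_eq_iff mult.commute)

lemma unitary_mat_iff:
  "unitary_mat k U \<longleftrightarrow> is_mat k U \<and> mmult k U (madj U) = idm k \<and> mmult k (madj U) U = idm k"
  by (simp add: unitary_mat_def is_mat_def)

lemma unitary_is_mat: "unitary_mat k U \<Longrightarrow> is_mat k U"
  by (simp add: unitary_mat_iff)

lemma unitary_idm [simp]: "unitary_mat k (idm k)"
  by (simp add: unitary_mat_iff mmult_idm_left)

lemma unitary_madj: "unitary_mat k U \<Longrightarrow> unitary_mat k (madj U)"
  by (simp add: unitary_mat_iff is_mat_madj)

lemma unitary_mmult:
  assumes U: "unitary_mat k U" and V: "unitary_mat k V"
  shows "unitary_mat k (mmult k U V)"
proof -
  have "mmult k (mmult k U V) (madj (mmult k U V)) = mmult k U (mmult k (mmult k V (madj V)) (madj U))"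
    "mmult k (madj (mmult k U V)) (mmult k U V) = mmult k (madj V) (mmult k (mmult k (madj U) U) V)"
    by (simp_all add: madj_mmult mmult_assoc)
  then show ?thesis
    using U V by (simp add: unitary_mat_iff mmult_idm_left is_mat_madj)
qed

lemma unitary_mpow: "unitary_mat k U \<Longrightarrow> unitary_mat k (mpow k U N)"
  by (induction N) (auto intro: unitary_mmult)

lemma mpow_idm: "mpow k (idm k) N = idm k"
  by (induction N) (simp_all add: mmult_idm_left)

lemma mpow_commute: "mmult k (mpow k A N) A = mmult k A (mpow k A N)"
proof (induction N)
  case 0
  show ?case
    by (auto simp: mmult_def idm_def fun_eq_iff mult_if_delta mult.commute[of _ "if _ then _ else _"])
next
  case (Suc N)
  then show ?case by (simp add: mmult_assoc)
qed

lemma madj_mpow: "madj (mpow k A N) = mpow k (madj A) N"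
  by (induction N) (simp_all add: madj_mmult mpow_commute)

lemma mpow_mult_mpow_madj:
  "unitary_mat k U \<Longrightarrow> mmult k (mpow k U N) (mpow k (madj U) N) = idm k"
  using unitary_mpow[of k U N] by (simp add: unitary_mat_iff madj_mpow[symmetric])

lemma continuous_on_if_const [continuous_intros]:
  "continuous_on S f \<Longrightarrow> continuous_on S g \<Longrightarrow> continuous_on S (\<lambda>x. if c then f x else g x)"
  by (cases c) auto

lemma mcont_const [simp]: "mcont S (\<lambda>x. A)"
  by (simp add: mcont_def)

lemma mcont_mmult: "mcont S F \<Longrightarrow> mcont S G \<Longrightarrow> mcont S (\<lambda>x. mmult k (F x) (G x))"
  unfolding mcont_def mmult_def by (auto intro!: continuous_intros)

lemma mcont_madj: "mcont S F \<Longrightarrow> mcont S (\<lambda>x. madj (F x))"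
  unfolding mcont_def madj_def by (auto intro!: continuous_intros)

lemma mcont_mpow: "mcont S F \<Longrightarrow> mcont S (\<lambda>x. mpow k (F x) N)"
  by (induction N) (auto intro: mcont_mmult)

lemma mcont_corner: "mcont S F \<Longrightarrow> mcont S (\<lambda>x. corner k l (F x))"
  unfolding mcont_def corner_def by (auto intro!: continuous_intros)

lemma mcont_compose:
  "mcont T F \<Longrightarrow> continuous_on S g \<Longrightarrow> g ` S \<subseteq> T \<Longrightarrow> mcont S (\<lambda>x. F (g x))"
  unfolding mcont_def using continuous_on_compose2 by blast

lemma mcont_cases_le:
  fixes h :: "'a::topological_space \<Rightarrow> real"
  assumes "mcont {x \<in> S. h x \<le> c} F" and "mcont {x \<in> S. c \<le> h x} G"
    and "continuous_on S h" and "\<And>x. x \<in> S \<Longrightarrow> h x = c \<Longrightarrow> F x = G x"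
  shows "mcont S (\<lambda>x. if h x \<le> c then F x else G x)"
  unfolding mcont_def
proof (intro allI)
  fix i j
  show "continuous_on S (\<lambda>x. (if h x \<le> c then F x else G x) i j)"
    unfolding if_distrib[of "\<lambda>A. A i j"]
    by (rule continuous_on_cases_le) (use assms in \<open>simp_all add: mcont_def\<close>)
qed

lemma mcont_cong: "mcont S F \<Longrightarrow> (\<And>x. x \<in> S \<Longrightarrow> F x = G x) \<Longrightarrow> mcont S G"
  unfolding mcont_def by (metis (mono_tags, lifting) continuous_on_cong)

section \<open>Unitary maps and their homotopies relative to a subspace\<close>

definition unitary_map :: "nat \<Rightarrow> 'x::topological_space set \<Rightarrow> 'x set \<Rightarrow> ('x \<Rightarrow> cmat) \<Rightarrow> bool" where
  "unitary_map k X B F \<longleftrightarrow> mcont X F \<and> (\<forall>x\<in>X. unitary_mat k (F x)) \<and> (\<forall>x\<in>B. F x = idm k)"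

definition unitary_htp ::
    "nat \<Rightarrow> 'x::topological_space set \<Rightarrow> 'x set \<Rightarrow> ('x \<Rightarrow> cmat) \<Rightarrow> ('x \<Rightarrow> cmat) \<Rightarrow> bool" where
  "unitary_htp k X B F G \<longleftrightarrow> (\<exists>H :: real \<times> 'x \<Rightarrow> cmat.
      unitary_map k ({0..1} \<times> X) ({0..1} \<times> B) H \<and> (\<forall>x\<in>X. H (0, x) = F x \<and> H (1, x) = G x))"

lemma unitary_map_idm: "unitary_map k X B (\<lambda>x. idm k)"
  by (simp add: unitary_map_def)

lemma unitary_map_mmult:
  "unitary_map k X B F \<Longrightarrow> unitary_map k X B G \<Longrightarrow> unitary_map k X B (\<lambda>x. mmult k (F x) (G x))"
  by (auto simp: unitary_map_def mmult_idm_left intro: mcont_mmult unitary_mmult)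

lemma unitary_map_madj: "unitary_map k X B F \<Longrightarrow> unitary_map k X B (\<lambda>x. madj (F x))"
  by (auto simp: unitary_map_def intro: mcont_madj unitary_madj)

lemma unitary_map_mpow: "unitary_map k X B F \<Longrightarrow> unitary_map k X B (\<lambda>x. mpow k (F x) N)"
  by (auto simp: unitary_map_def mpow_idm intro: mcont_mpow unitary_mpow)

lemma unitary_map_compose:
  assumes "unitary_map k Y C F" and "continuous_on X g" and "g ` X \<subseteq> Y" and "g ` B \<subseteq> C"
  shows "unitary_map k X B (\<lambda>x. F (g x))"
  using assms unfolding unitary_map_def by (auto intro: mcont_compose)

lemma unitary_map_image:
  assumes "unitary_map k X B F"
    and "\<And>G. mcont X G \<Longrightarrow> mcont X (\<lambda>x. \<Phi> (G x))"
    and "\<And>A. unitary_mat k A \<Longrightarrow> unitary_mat k' (\<Phi> A)" and "\<Phi> (idm k) = idm k'"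
  shows "unitary_map k' X B (\<lambda>x. \<Phi> (F x))"
  using assms unfolding unitary_map_def by auto

lemma unitary_map_cong:
  assumes "unitary_map k X B F" and "\<And>x. x \<in> X \<Longrightarrow> F x = G x" and "B \<subseteq> X"
  shows "unitary_map k X B G"
  using assms unfolding unitary_map_def subset_iff by (auto intro: mcont_cong)

lemma unitary_htp_refl:
  assumes "unitary_map k X B F"
  shows "unitary_htp k X B F F"
proof -
  have "unitary_map k ({0..1::real} \<times> X) ({0..1} \<times> B) (\<lambda>p. F (snd p))"
    using assms by (rule unitary_map_compose) (auto intro: continuous_on_snd)
  then show ?thesis
    unfolding unitary_htp_def by (intro exI[of _ "\<lambda>p. F (snd p)"]) simp
qed

lemma unitary_htp_sym:
  assumes "unitary_htp k X B F G"
  shows "unitary_htp k X B G F"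
proof -
  obtain H where H: "unitary_map k ({0..1::real} \<times> X) ({0..1} \<times> B) H"
    and ends: "\<forall>x\<in>X. H (0, x) = F x \<and> H (1, x) = G x"
    using assms unfolding unitary_htp_def by blast
  have "unitary_map k ({0..1} \<times> X) ({0..1} \<times> B) (\<lambda>p. H (1 - fst p, snd p))"
    using H by (rule unitary_map_compose) (auto intro!: continuous_intros)
  then show ?thesis
    using ends unfolding unitary_htp_def by (intro exI[of _ "\<lambda>p. H (1 - fst p, snd p)"]) auto
qed

lemma unitary_htp_trans [trans]:
  assumes "unitary_htp k X B F G" and "unitary_htp k X B G K"
  shows "unitary_htp k X B F K"
proof -
  obtain H1 where H1: "unitary_map k ({0..1::real} \<times> X) ({0..1} \<times> B) H1"
    and ends1: "\<forall>x\<in>X. H1 (0, x) = F x \<and> H1 (1, x) = G x"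
    using assms(1) unfolding unitary_htp_def by blast
  obtain H2 where H2: "unitary_map k ({0..1::real} \<times> X) ({0..1} \<times> B) H2"
    and ends2: "\<forall>x\<in>X. H2 (0, x) = G x \<and> H2 (1, x) = K x"
    using assms(2) unfolding unitary_htp_def by blast
  define H where "H = (\<lambda>p. if fst p \<le> 1/2 then H1 (2 * fst p, snd p) else H2 (2 * fst p - 1, snd p))"
  have first_half: "unitary_map k {p \<in> {0..1} \<times> X. fst p \<le> 1/2} {p \<in> {0..1} \<times> B. fst p \<le> 1/2}
      (\<lambda>p. H1 (2 * fst p, snd p))"
    using H1 by (rule unitary_map_compose) (auto intro!: continuous_intros)
  have second_half: "unitary_map k {p \<in> {0..1} \<times> X. 1/2 \<le> fst p} {p \<in> {0..1} \<times> B. 1/2 \<le> fst p}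
      (\<lambda>p. H2 (2 * fst p - 1, snd p))"
    using H2 by (rule unitary_map_compose) (auto intro!: continuous_intros)
  have glue: "H1 (2 * fst p, snd p) = H2 (2 * fst p - 1, snd p)"
    if "p \<in> {0..1} \<times> X" "fst p = 1/2" for p
  proof -
    have "2 * fst p = 1" "2 * fst p - 1 = 0"
      using that(2) by simp_all
    then show ?thesis
      using that(1) ends1 ends2 by (cases p) auto
  qed
  have "mcont ({0..1} \<times> X) H"
    unfolding H_def
    by (rule mcont_cases_le) (use first_half second_half glue in \<open>simp_all add: unitary_map_def continuous_on_fst\<close>)
  moreover have "unitary_mat k (H p)" if "p \<in> {0..1} \<times> X" for p
    using that first_half second_half unfolding unitary_map_def H_def
    by (cases "fst p \<le> 1/2") auto
  moreover have "H p = idm k" if "p \<in> {0..1} \<times> B" for p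
    using that first_half second_half unfolding unitary_map_def H_def
    by (cases "fst p \<le> 1/2") auto
  ultimately have "unitary_map k ({0..1} \<times> X) ({0..1} \<times> B) H"
    unfolding unitary_map_def by blast
  moreover have "H (0, x) = F x" "H (1, x) = K x" if "x \<in> X" for x
    using that ends1 ends2 by (simp_all add: H_def)
  ultimately show ?thesis
    unfolding unitary_htp_def by (intro exI[of _ H]) simp
qed

lemma unitary_htp_mmult:
  assumes "unitary_htp k X B F G" and "unitary_htp k X B F' G'"
  shows "unitary_htp k X B (\<lambda>x. mmult k (F x) (F' x)) (\<lambda>x. mmult k (G x) (G' x))"
proof -
  obtain H1 where H1: "unitary_map k ({0..1::real} \<times> X) ({0..1} \<times> B) H1"
    and ends1: "\<forall>x\<in>X. H1 (0, x) = F x \<and> H1 (1, x) = G x"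
    using assms(1) unfolding unitary_htp_def by blast
  obtain H2 where H2: "unitary_map k ({0..1::real} \<times> X) ({0..1} \<times> B) H2"
    and ends2: "\<forall>x\<in>X. H2 (0, x) = F' x \<and> H2 (1, x) = G' x"
    using assms(2) unfolding unitary_htp_def by blast
  show ?thesis
    using unitary_map_mmult[OF H1 H2] ends1 ends2 unfolding unitary_htp_def
    by (intro exI[of _ "\<lambda>p. mmult k (H1 p) (H2 p)"]) auto
qed

lemma unitary_htp_image:
  assumes "unitary_htp k X B F G"
    and "\<And>H. mcont ({0..1::real} \<times> X) H \<Longrightarrow> mcont ({0..1} \<times> X) (\<lambda>p. \<Phi> (H p))"
    and "\<And>A. unitary_mat k A \<Longrightarrow> unitary_mat k' (\<Phi> A)" and "\<Phi> (idm k) = idm k'"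
  shows "unitary_htp k' X B (\<lambda>x. \<Phi> (F x)) (\<lambda>x. \<Phi> (G x))"
proof -
  obtain H where H: "unitary_map k ({0..1::real} \<times> X) ({0..1} \<times> B) H"
    and ends: "\<forall>x\<in>X. H (0, x) = F x \<and> H (1, x) = G x"
    using assms(1) unfolding unitary_htp_def by blast
  have "unitary_map k' ({0..1} \<times> X) ({0..1} \<times> B) (\<lambda>p. \<Phi> (H p))"
    using H by (rule unitary_map_image[where \<Phi> = \<Phi>]) (use assms(2-4) in auto)
  then show ?thesis
    using ends unfolding unitary_htp_def by (intro exI[of _ "\<lambda>p. \<Phi> (H p)"]) auto
qed

lemma unitary_htp_cong:
  assumes "unitary_htp k X B F G"
    and "\<And>x. x \<in> X \<Longrightarrow> F x = F' x" and "\<And>x. x \<in> X \<Longrightarrow> G x = G' x"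
  shows "unitary_htp k X B F' G'"
  using assms unfolding unitary_htp_def by metis

lemma unitary_htp_imp_unitary_map:
  assumes "unitary_htp k X B F G" and "B \<subseteq> X"
  shows "unitary_map k X B F"
proof -
  obtain H where H: "unitary_map k ({0..1::real} \<times> X) ({0..1} \<times> B) H"
    and ends: "\<forall>x\<in>X. H (0, x) = F x"
    using assms(1) unfolding unitary_htp_def by blast
  have "unitary_map k X B (\<lambda>x. H (0, x))"
    using H by (rule unitary_map_compose) (auto intro!: continuous_intros)
  then show ?thesis
    by (rule unitary_map_cong) (use ends assms(2) in auto)
qed

lemma unitary_htp_mpow:
  assumes "unitary_htp k X B F G"
  shows "unitary_htp k X B (\<lambda>x. mpow k (F x) N) (\<lambda>x. mpow k (G x) N)"
  by (rule unitary_htp_image[OF assms]) (auto intro: mcont_mpow unitary_mpow simp: mpow_idm)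

lemma pi_htp_iff_unitary_htp: "pi_htp k e f g \<longleftrightarrow> unitary_htp k (sphere 0 1) {e} f g"
  unfolding pi_htp_def unitary_htp_def unitary_map_def by auto

abbreviation cs_base :: "'v::real_normed_vector \<Rightarrow> ('v \<times> complex) set" where
  "cs_base e \<equiv> sphere 0 1 \<times> {1} \<union> {e} \<times> circle"

lemma cs_htp_iff_unitary_htp:
  assumes "e \<in> sphere 0 1"
  shows "cs_htp k e F G \<longleftrightarrow> unitary_htp k (sphere 0 1 \<times> circle) (cs_base e) F G"
  unfolding cs_htp_def unitary_htp_def unitary_map_def using assms by (auto 0 3)

lemma pi_htp_imp_pi_rat_eq: "pi_htp k e f g \<Longrightarrow> pi_rat_eq k e f g"
  unfolding pi_rat_eq_def pi_htp_iff_unitary_htp by (blast intro: unitary_htp_mpow)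

lemma cs_htp_imp_cs_rat_eq: "e \<in> sphere 0 1 \<Longrightarrow> cs_htp k e F G \<Longrightarrow> cs_rat_eq k e F G"
  unfolding cs_rat_eq_def cs_htp_iff_unitary_htp by (blast intro: unitary_htp_mpow)

section \<open>Block diagonal matrices\<close>

definition blockdiag :: "nat \<Rightarrow> nat \<Rightarrow> nat \<Rightarrow> (nat \<Rightarrow> cmat) \<Rightarrow> cmat" where
  "blockdiag n l a A = (\<lambda>i j. if i < n * a \<and> j < n * a \<and> i div n = j div n
     then A (i div n) (i mod n) (j mod n) else if i = j \<and> i < l then 1 else 0)"

definition block_at :: "nat \<Rightarrow> nat \<Rightarrow> nat \<Rightarrow> nat \<Rightarrow> cmat \<Rightarrow> cmat" where
  "block_at n l a p A = blockdiag n l a (\<lambda>q. if q = p then A else idm n)"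

fun mprod :: "nat \<Rightarrow> (nat \<Rightarrow> cmat) \<Rightarrow> nat \<Rightarrow> cmat" where
  "mprod k F 0 = idm k"
| "mprod k F (Suc m) = mmult k (F m) (mprod k F m)"

lemma phi_u_eq_blockdiag: "phi_u n l a lam U (s, z) = blockdiag n l a (\<lambda>p. U (s, lam p z))"
  by (simp add: phi_u_def blockdiag_def)

lemma blockdiag_cong:
  "0 < n \<Longrightarrow> (\<And>p. p < a \<Longrightarrow> A p = A' p) \<Longrightarrow> blockdiag n l a A = blockdiag n l a A'"
  unfolding blockdiag_def by (auto simp: fun_eq_iff less_mult_imp_div_less mult.commute)

lemma block_index_less:
  fixes q r :: nat
  assumes "q < a" and "r < n"
  shows "q * n + r < n * a"
proof -
  have "q * n + r < (q + 1) * n"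
    using assms(2) by simp
  also have "\<dots> \<le> a * n"
    using assms(1) by (intro mult_right_mono) auto
  finally show ?thesis
    by (simp add: mult.commute)
qed

lemma sum_over_block:
  fixes g :: "nat \<Rightarrow> complex"
  assumes "q < a" and "n * a \<le> l" and "0 < n"
  shows "(\<Sum>r<l. if r < n * a \<and> r div n = q then g r else 0) = (\<Sum>r<n. g (q * n + r))"
proof -
  have "{r. r < l \<and> r < n * a \<and> r div n = q} = (\<lambda>r. q * n + r) ` {..<n}"
  proof (intro set_eqI iffI)
    fix r
    assume "r \<in> {r. r < l \<and> r < n * a \<and> r div n = q}"
    then have "r = q * n + r mod n" and "r mod n < n"
      using div_mult_mod_eq[of r n] assms(3) by auto
    then show "r \<in> (\<lambda>r. q * n + r) ` {..<n}"
      by blast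
  next
    fix r
    assume "r \<in> (\<lambda>r. q * n + r) ` {..<n}"
    then obtain r' where "r' < n" "r = q * n + r'"
      by auto
    moreover have "q * n + r' < n * a"
      using block_index_less[OF assms(1) \<open>r' < n\<close>] .
    ultimately show "r \<in> {r. r < l \<and> r < n * a \<and> r div n = q}"
      using assms(2) by auto
  qed
  then have "(\<Sum>r<l. if r < n * a \<and> r div n = q then g r else 0) = (\<Sum>r\<in>(\<lambda>r. q * n + r) ` {..<n}. g r)"
    by (simp add: sum.If_cases Int_def)
  also have "\<dots> = (\<Sum>r<n. g (q * n + r))"
    by (rule sum.reindex_cong[where l = "\<lambda>r. q * n + r"]) (auto simp: inj_on_def)
  finally show ?thesis .
qed

lemma sum_blockdiag_row:
  assumes "i < n * a" and "n * a \<le> l" and "0 < n"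
  shows "(\<Sum>r<l. blockdiag n l a A i r * X r) =
    (\<Sum>r<n. A (i div n) (i mod n) r * X (i div n * n + r))"
proof -
  have q: "i div n < a"
    using assms by (simp add: less_mult_imp_div_less mult.commute)
  have "(\<Sum>r<l. blockdiag n l a A i r * X r) =
      (\<Sum>r<l. if r < n * a \<and> r div n = i div n then A (i div n) (i mod n) (r mod n) * X r else 0)"
    by (rule sum.cong) (use assms in \<open>auto simp: blockdiag_def\<close>)
  also have "\<dots> = (\<Sum>r<n. A (i div n) (i mod n) ((i div n * n + r) mod n) * X (i div n * n + r))"
    by (rule sum_over_block[OF q assms(2,3)])
  also have "\<dots> = (\<Sum>r<n. A (i div n) (i mod n) r * X (i div n * n + r))"
    by (rule sum.cong) auto
  finally show ?thesis .
qed

lemma mmult_blockdiag: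
  assumes "n * a \<le> l" and "0 < n"
  shows "mmult l (blockdiag n l a A) (blockdiag n l a B) = blockdiag n l a (\<lambda>p. mmult n (A p) (B p))"
proof (intro ext)
  fix i j
  show "mmult l (blockdiag n l a A) (blockdiag n l a B) i j = blockdiag n l a (\<lambda>p. mmult n (A p) (B p)) i j"
  proof (cases "i < l \<and> j < l")
    case False
    then show ?thesis
      using assms by (auto simp: mmult_def blockdiag_def)
  next
    case ij: True
    show ?thesis
    proof (cases "i < n * a")
      case True
      let ?q = "i div n"
      have q: "?q < a"
        using True assms by (simp add: less_mult_imp_div_less mult.commute)
      have "mmult l (blockdiag n l a A) (blockdiag n l a B) i j =
          (\<Sum>r<n. A ?q (i mod n) r * blockdiag n l a B (?q * n + r) j)"
        using ij sum_blockdiag_row[OF True assms] by (simp add: mmult_def)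
      also have "\<dots> = (\<Sum>r<n. A ?q (i mod n) r * (if j < n * a \<and> j div n = ?q then B ?q r (j mod n) else 0))"
      proof (rule sum.cong[OF refl])
        fix r
        assume "r \<in> {..<n}"
        then have "?q * n + r < n * a" "(?q * n + r) div n = ?q" "(?q * n + r) mod n = r"
          using block_index_less[OF q] assms by auto
        then show "A ?q (i mod n) r * blockdiag n l a B (?q * n + r) j =
            A ?q (i mod n) r * (if j < n * a \<and> j div n = ?q then B ?q r (j mod n) else 0)"
          by (auto simp: blockdiag_def)
      qed
      also have "\<dots> = blockdiag n l a (\<lambda>p. mmult n (A p) (B p)) i j"
        using True assms by (auto simp: blockdiag_def mmult_def)
      finally show ?thesis .
    next
      case False
      have "mmult l (blockdiag n l a A) (blockdiag n l a B) i j =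
          (\<Sum>r<l. (if r = i then 1 else 0) * blockdiag n l a B r j)"
        using ij False by (auto simp: mmult_def blockdiag_def intro!: sum.cong)
      also have "\<dots> = blockdiag n l a (\<lambda>p. mmult n (A p) (B p)) i j"
        using ij False by (simp add: mult_if_delta blockdiag_def)
      finally show ?thesis .
    qed
  qed
qed

lemma madj_blockdiag: "madj (blockdiag n l a A) = blockdiag n l a (\<lambda>p. madj (A p))"
  by (auto simp: blockdiag_def madj_def fun_eq_iff)

lemma div_mod_eq_imp_eq: "(i::nat) div n = j div n \<Longrightarrow> i mod n = j mod n \<Longrightarrow> i = j"
  by (metis div_mult_mod_eq)

lemma blockdiag_idm:
  assumes "0 < n" and "n * a \<le> l"
  shows "blockdiag n l a (\<lambda>p. idm n) = idm l"
proof (intro ext)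
  fix i j
  show "blockdiag n l a (\<lambda>p. idm n) i j = idm l i j"
  proof (cases "i < n * a \<and> j < n * a \<and> i div n = j div n")
    case True
    then show ?thesis
      using assms div_mod_eq_imp_eq[of i n j] by (auto simp: blockdiag_def idm_def)
  next
    case False
    then show ?thesis
      by (auto simp: blockdiag_def idm_def)
  qed
qed

lemma corner_eq_block_at_0:
  assumes "0 < n" and "1 \<le> a" and "n * a \<le> l"
  shows "corner n l A = block_at n l a 0 A"
proof (intro ext)
  fix i j
  have na: "n \<le> n * a"
    using assms by simp
  show "corner n l A i j = block_at n l a 0 A i j"
  proof (cases "i < n \<and> j < n")
    case True
    then have "i < n * a" "j < n * a"
      using na by linarith+
    then show ?thesis
      using True by (simp add: corner_def block_at_def blockdiag_def)
  next
    case outside: False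
    show ?thesis
    proof (cases "i < n * a \<and> j < n * a \<and> i div n = j div n")
      case True
      then have "i div n \<noteq> 0"
        using outside assms(1) by (auto simp: div_eq_0_iff)
      then show ?thesis
        using True outside assms div_mod_eq_imp_eq[of i n j]
        by (auto simp: corner_def block_at_def blockdiag_def idm_def)
    next
      case False
      then show ?thesis
        using outside by (auto simp: corner_def block_at_def blockdiag_def)
    qed
  qed
qed

lemma blockdiag_eq_mprod_block_at:
  assumes "n * a \<le> l" and "0 < n" and "\<And>p. p < a \<Longrightarrow> is_mat n (A p)"
  shows "blockdiag n l a A = mprod l (\<lambda>p. block_at n l a p (A p)) a"
proof -
  have "m \<le> a \<Longrightarrow> mprod l (\<lambda>p. block_at n l a p (A p)) m = blockdiag n l a (\<lambda>p. if p < m then A p else idm n)"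
    for m
  proof (induction m)
    case 0
    then show ?case
      using assms by (simp add: blockdiag_idm)
  next
    case (Suc m)
    have "mprod l (\<lambda>p. block_at n l a p (A p)) (Suc m) =
        blockdiag n l a (\<lambda>p. mmult n (if p = m then A m else idm n) (if p < m then A p else idm n))"
      using Suc assms by (simp add: block_at_def mmult_blockdiag)
    also have "\<dots> = blockdiag n l a (\<lambda>p. if p < Suc m then A p else idm n)"
      using assms by (intro blockdiag_cong) (auto simp: mmult_idm_left mmult_idm_right less_Suc_eq)
    finally show ?case .
  qed
  moreover have "blockdiag n l a A = blockdiag n l a (\<lambda>p. if p < a then A p else idm n)"
    using assms by (intro blockdiag_cong) auto
  ultimately show ?thesis
    by simp
qed

lemma mprod_const: "mprod k (\<lambda>p. A) m = mpow k A m"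
  by (induction m) auto

lemma corner_eq_blockdiag:
  assumes "0 < n" and "n \<le> l"
  shows "corner n l A = blockdiag n l 1 (\<lambda>p. A)"
proof -
  have "block_at n l 1 0 A = blockdiag n l 1 (\<lambda>p. A)"
    unfolding block_at_def by (rule blockdiag_cong[OF assms(1)]) simp
  then show ?thesis
    using corner_eq_block_at_0[of n 1 l A] assms by simp
qed

lemma mmult_corner:
  assumes "0 < n" and "n \<le> l"
  shows "mmult l (corner n l A) (corner n l B) = corner n l (mmult n A B)"
  using assms by (simp add: corner_eq_blockdiag mmult_blockdiag)

lemma corner_idm:
  assumes "0 < n" and "n \<le> l"
  shows "corner n l (idm n) = idm l"
  using assms by (simp add: corner_eq_blockdiag blockdiag_idm)

lemma madj_corner: "madj (corner n l A) = corner n l (madj A)"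
  by (auto simp: corner_def madj_def fun_eq_iff)

lemma is_mat_corner: "n \<le> l \<Longrightarrow> is_mat l (corner n l A)"
  by (auto simp: corner_def is_mat_def)

lemma unitary_corner:
  assumes "unitary_mat n A" and "0 < n" and "n \<le> l"
  shows "unitary_mat l (corner n l A)"
  using assms is_mat_corner[OF assms(3)]
  by (simp add: unitary_mat_iff madj_corner mmult_corner corner_idm)

lemma corner_mpow:
  assumes "0 < n" and "n \<le> l"
  shows "corner n l (mpow n A N) = mpow l (corner n l A) N"
  by (induction N) (simp_all add: assms mmult_corner[symmetric] corner_idm)

lemma corner_mzpow:
  assumes "0 < n" and "n \<le> l"
  shows "corner n l (mzpow n A b) = mzpow l (corner n l A) b"
  by (simp add: mzpow_def corner_mpow[OF assms] madj_corner)

lemma mprod_corner: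
  assumes "0 < n" and "n \<le> l"
  shows "mprod l (\<lambda>p. corner n l (F p)) m = corner n l (mprod n F m)"
  by (induction m) (simp_all add: assms mmult_corner[symmetric] corner_idm)

lemma unitary_map_corner:
  assumes "unitary_map n X B F" and "0 < n" and "n \<le> l"
  shows "unitary_map l X B (\<lambda>x. corner n l (F x))"
  using assms(1) by (rule unitary_map_image) (simp_all add: mcont_corner unitary_corner corner_idm assms(2,3))

lemma unitary_htp_corner:
  assumes "unitary_htp n X B F G" and "0 < n" and "n \<le> l"
  shows "unitary_htp l X B (\<lambda>x. corner n l (F x)) (\<lambda>x. corner n l (G x))"
  using assms(1) by (rule unitary_htp_image) (simp_all add: mcont_corner unitary_corner corner_idm assms(2,3))

section \<open>Moving a block along a path of rotations\<close>

lemma cnj_if_zero [simp]: "cnj (if P then z else 0) = (if P then cnj z else 0)"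
  by simp

lemma mmult_monomial_conj:
  fixes \<rho> :: "nat \<Rightarrow> nat" and \<epsilon> :: "nat \<Rightarrow> complex"
  assumes "\<And>i. i < l \<Longrightarrow> \<rho> i < l" and "i < l" and "j < l"
  defines "M \<equiv> \<lambda>i j. if i < l \<and> j = \<rho> i then \<epsilon> i else 0"
  shows "mmult l (mmult l M X) (madj M) i j = \<epsilon> i * X (\<rho> i) (\<rho> j) * cnj (\<epsilon> j)"
proof -
  have MX: "mmult l M X i r = \<epsilon> i * X (\<rho> i) r" if "r < l" for r
    using that assms by (simp add: mmult_def M_def if_distrib[of "\<lambda>x. x * _"] sum.delta cong: if_cong)
  have "mmult l (mmult l M X) (madj M) i j = (\<Sum>r<l. \<epsilon> i * X (\<rho> i) r * (if r = \<rho> j then cnj (\<epsilon> j) else 0))"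
    using assms(2,3) MX by (simp add: mmult_def madj_def M_def eq_commute[of _ "\<rho> j"])
  also have "\<dots> = \<epsilon> i * X (\<rho> i) (\<rho> j) * cnj (\<epsilon> j)"
    using assms(1,3) by (simp add: if_distrib[of "\<lambda>x. _ * x"] sum.delta cong: if_cong)
  finally show ?thesis .
qed

text \<open>For an involution \<open>\<sigma>\<close> of \<open>{..<l}\<close>, \<open>swap_rot l \<sigma> t\<close> is \<open>exp (\<i> t \<pi>/2 P\<^sub>\<sigma>)\<close> on the
  coordinates moved by \<open>\<sigma>\<close> and the identity on the others: it rotates each pair \<open>{i, \<sigma> i}\<close>
  and ends at \<open>\<i> P\<^sub>\<sigma>\<close> for \<open>t = 1\<close>.\<close>

definition rot_diag :: "(nat \<Rightarrow> nat) \<Rightarrow> real \<Rightarrow> nat \<Rightarrow> complex" where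
  "rot_diag \<sigma> t i = (if \<sigma> i = i then 1 else of_real (cos (t * pi / 2)))"

definition rot_off :: "(nat \<Rightarrow> nat) \<Rightarrow> real \<Rightarrow> nat \<Rightarrow> complex" where
  "rot_off \<sigma> t i = (if \<sigma> i = i then 0 else \<i> * of_real (sin (t * pi / 2)))"

definition swap_rot :: "nat \<Rightarrow> (nat \<Rightarrow> nat) \<Rightarrow> real \<Rightarrow> cmat" where
  "swap_rot l \<sigma> t = (\<lambda>i j. (if i < l \<and> j = i then rot_diag \<sigma> t i else 0)
                         + (if i < l \<and> j = \<sigma> i then rot_off \<sigma> t i else 0))"

lemma mcont_swap_rot:
  fixes S :: "'a::t2_space set"
  shows "continuous_on S f \<Longrightarrow> mcont S (\<lambda>x. swap_rot l \<sigma> (f x))"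
  unfolding mcont_def swap_rot_def rot_diag_def rot_off_def by (auto intro!: continuous_intros)

lemma swap_rot_0: "swap_rot l \<sigma> 0 = idm l"
  by (auto simp: swap_rot_def rot_diag_def rot_off_def idm_def fun_eq_iff)

lemma sum_two_deltas:
  fixes f g f' g' :: complex and i j i' j' l :: nat
  assumes "i < l" "j < l" "i' < l" "j' < l"
  shows "(\<Sum>r<l. ((if r = i then f else 0) + (if r = i' then g else 0)) *
                 ((if r = j then f' else 0) + (if r = j' then g' else 0))) =
    (if i = j then f * f' else 0) + (if i = j' then f * g' else 0) +
    (if i' = j then g * f' else 0) + (if i' = j' then g * g' else 0)"
proof -
  have "(\<Sum>r<l. if r = u \<and> r = v then c else 0) = (if u = v then c else 0)" if "u < l" for u v :: nat and c :: complex
    using that by (cases "u = v") (auto intro!: sum.neutral)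
  then show ?thesis
    using assms by (simp add: distrib_left distrib_right sum.distrib if_distrib[of "\<lambda>x. x * _"]
        if_distrib[of "\<lambda>x. _ * x"] if_if_eq_conj cong: if_cong)
qed

context
  fixes l :: nat and \<sigma> :: "nat \<Rightarrow> nat"
  assumes involution: "\<And>i. \<sigma> (\<sigma> i) = i" and bounded: "\<And>i. i < l \<Longrightarrow> \<sigma> i < l"
begin

lemma rot_diag_swap: "rot_diag \<sigma> t (\<sigma> i) = rot_diag \<sigma> t i"
  and rot_off_swap: "rot_off \<sigma> t (\<sigma> i) = rot_off \<sigma> t i"
  by (metis involution rot_diag_def rot_off_def)+

lemma is_mat_swap_rot: "is_mat l (swap_rot l \<sigma> t)"
  by (auto simp: is_mat_def swap_rot_def bounded)

lemma madj_swap_rot: "madj (swap_rot l \<sigma> t) = swap_rot l \<sigma> (- t)"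
proof (intro ext)
  fix i j
  have "j = \<sigma> i \<longleftrightarrow> i = \<sigma> j"
    using involution by metis
  moreover have "i < l \<longleftrightarrow> j < l" if "j = \<sigma> i"
    using that bounded involution by metis
  ultimately show "madj (swap_rot l \<sigma> t) i j = swap_rot l \<sigma> (- t) i j"
    by (auto simp: madj_def swap_rot_def rot_diag_def rot_off_def rot_off_swap[symmetric])
qed

lemma mmult_swap_rot_madj: "mmult l (swap_rot l \<sigma> t) (madj (swap_rot l \<sigma> t)) = idm l"
proof (intro ext)
  fix i j
  let ?c = "rot_diag \<sigma> t" and ?s = "rot_off \<sigma> t"
  show "mmult l (swap_rot l \<sigma> t) (madj (swap_rot l \<sigma> t)) i j = idm l i j"
  proof (cases "i < l \<and> j < l")
    case False
    then show ?thesis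
      by (auto simp: mmult_def idm_def)
  next
    case True
    have "mmult l (swap_rot l \<sigma> t) (madj (swap_rot l \<sigma> t)) i j =
        (\<Sum>r<l. ((if r = i then ?c i else 0) + (if r = \<sigma> i then ?s i else 0)) *
               ((if r = j then cnj (?c j) else 0) + (if r = \<sigma> j then cnj (?s j) else 0)))"
      using True by (simp add: mmult_def madj_def swap_rot_def eq_commute)
    also have "\<dots> = (if i = j then ?c i * cnj (?c j) else 0) + (if i = \<sigma> j then ?c i * cnj (?s j) else 0)
        + (if \<sigma> i = j then ?s i * cnj (?c j) else 0) + (if \<sigma> i = \<sigma> j then ?s i * cnj (?s j) else 0)"
      using True bounded by (intro sum_two_deltas) auto
    also have "\<dots> = idm l i j"
    proof -
      have "?c i * cnj (?c i) + ?s i * cnj (?s i) = 1"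
        by (simp add: rot_diag_def rot_off_def cos_squared_eq[symmetric] complex_eq_iff power2_eq_square)
      moreover have "?c i * cnj (?s i) + ?s i * cnj (?c i) = 0"
        by (simp add: rot_diag_def rot_off_def)
      moreover have "\<sigma> i = \<sigma> j \<longleftrightarrow> i = j" and "i = \<sigma> j \<longleftrightarrow> \<sigma> i = j"
        using involution by metis+
      ultimately show ?thesis
        using True by (auto simp: idm_def rot_diag_swap rot_off_swap rot_off_def)
    qed
    finally show ?thesis .
  qed
qed

lemma unitary_swap_rot: "unitary_mat l (swap_rot l \<sigma> t)"
  using mmult_swap_rot_madj[of t] mmult_swap_rot_madj[of "- t"] is_mat_swap_rot
  by (simp add: unitary_mat_iff madj_swap_rot)

lemma swap_rot_1: "swap_rot l \<sigma> 1 = (\<lambda>i j. if i < l \<and> j = \<sigma> i then (if \<sigma> i = i then 1 else \<i>) else 0)"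
  by (auto simp: swap_rot_def rot_diag_def rot_off_def fun_eq_iff)

end

lemma div_mod_block:
  fixes p n r :: nat
  assumes "r < n"
  shows "(p * n + r) div n = p" and "(p * n + r) mod n = r"
  using assms by simp_all

definition block_swap :: "nat \<Rightarrow> nat \<Rightarrow> nat \<Rightarrow> nat" where
  "block_swap n p i = (if i div n = 0 then p * n + i mod n else if i div n = p then i mod n else i)"

context
  fixes n p :: nat
  assumes n: "0 < n" and p: "p \<noteq> 0"
begin

lemma block_index_not_less: "\<not> p * n + r < n"
proof -
  have "n \<le> p * n"
    using p by simp
  then show ?thesis
    by linarith
qed

lemma block_swap_block_swap: "block_swap n p (block_swap n p i) = i"
  using n p div_mod_block[of "i mod n"] div_mult_mod_eq[of i n] block_index_not_less
  by (auto simp: block_swap_def div_eq_0_iff)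

lemma block_swap_less:
  assumes "p < a" and "n * a \<le> l" and "i < l"
  shows "block_swap n p i < l"
proof -
  have "(p + 1) * n \<le> a * n"
    using assms(1) by (intro mult_le_mono1) simp
  moreover have "p * n + i mod n < (p + 1) * n"
    using n by simp
  moreover have "i mod n \<le> i"
    by simp
  ultimately show ?thesis
    using assms(2,3) by (auto simp: block_swap_def mult.commute)
qed

lemma block_swap_eq_self_iff: "block_swap n p i = i \<longleftrightarrow> i div n \<noteq> 0 \<and> i div n \<noteq> p"
  using n p by (auto simp: block_swap_def mod_eq_self_iff_div_eq_0 div_eq_0_iff)

lemma block_swap_less_iff: "block_swap n p i < n \<longleftrightarrow> i div n = p"
  using n p block_index_not_less by (auto simp: block_swap_def div_eq_0_iff)

end

lemma block_at_apply:
  assumes "0 < n" and "p < a" and "n * a \<le> l" and "i < l" and "j < l"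
  shows "block_at n l a p A i j =
    (if i div n = p \<and> j div n = p then A (i mod n) (j mod n) else if i = j then 1 else 0)"
proof (cases "i < n * a \<and> j < n * a \<and> i div n = j div n")
  case True
  then have "i mod n = j mod n \<longleftrightarrow> i = j"
    using div_mod_eq_imp_eq by blast
  then show ?thesis
    using True assms(1) by (auto simp: block_at_def blockdiag_def idm_def)
next
  case False
  moreover have "i < n * a" if "i div n = p"
    using that assms(1,2) by (metis div_less_iff_less_mult mult.commute)
  moreover have "j < n * a" if "j div n = p"
    using that assms(1,2) by (metis div_less_iff_less_mult mult.commute)
  ultimately show ?thesis
    using assms(4) by (auto simp: block_at_def blockdiag_def)
qed

lemma swap_rot_conj_corner:
  assumes n: "0 < n" and p: "p \<noteq> 0" "p < a" and l: "n * a \<le> l"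
  defines "R \<equiv> swap_rot l (block_swap n p) 1"
  shows "mmult l (mmult l R (corner n l A)) (madj R) = block_at n l a p A"
proof (intro ext)
  fix i j
  let ?\<sigma> = "block_swap n p"
  let ?\<epsilon> = "\<lambda>i. if ?\<sigma> i = i then 1 else \<i>"
  show "mmult l (mmult l R (corner n l A)) (madj R) i j = block_at n l a p A i j"
  proof (cases "i < l \<and> j < l")
    case False
    then show ?thesis
      using l by (auto simp: mmult_def block_at_def blockdiag_def)
  next
    case True
    have bounded: "\<And>i. i < l \<Longrightarrow> ?\<sigma> i < l"
      using block_swap_less[OF n p l] .
    have "R = (\<lambda>i j. if i < l \<and> j = ?\<sigma> i then ?\<epsilon> i else 0)"
      unfolding R_def by (rule swap_rot_1[OF block_swap_block_swap[OF n p(1)] bounded])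
    then have conj: "mmult l (mmult l R (corner n l A)) (madj R) i j =
        ?\<epsilon> i * corner n l A (?\<sigma> i) (?\<sigma> j) * cnj (?\<epsilon> j)"
      using True bounded mmult_monomial_conj[of l ?\<sigma> i j ?\<epsilon>] by simp
    show ?thesis
    proof (cases "i div n = p \<and> j div n = p")
      case both: True
      have "?\<sigma> i = i mod n" "?\<sigma> j = j mod n"
        using both p(1) by (simp_all add: block_swap_def)
      moreover have "?\<sigma> i \<noteq> i" "?\<sigma> j \<noteq> j"
        using both block_swap_eq_self_iff[OF n p(1)] by simp_all
      moreover have "- (\<i> * z * \<i>) = z" for z :: complex
        by (simp add: mult.commute mult.left_commute)
      ultimately show ?thesis
        using conj both True n by (simp add: corner_def block_at_apply[OF n p(2) l])
    next
      case False
      then have "\<not> (?\<sigma> i < n \<and> ?\<sigma> j < n)"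
        using block_swap_less_iff[OF n p(1)] by blast
      moreover have "?\<sigma> i = ?\<sigma> j \<longleftrightarrow> i = j"
        using block_swap_block_swap[OF n p(1)] by metis
      ultimately have "corner n l A (?\<sigma> i) (?\<sigma> j) = (if i = j then 1 else 0)"
        using True bounded by (auto simp: corner_def)
      then show ?thesis
        using conj False True by (cases "i = j") (auto simp: block_at_apply[OF n p(2) l])
    qed
  qed
qed

lemma unitary_htp_conj_path:
  fixes R :: "real \<Rightarrow> cmat"
  assumes F: "unitary_map l X B F"
    and R: "mcont {0..1} R" "\<And>t. t \<in> {0..1} \<Longrightarrow> unitary_mat l (R t)" "R 0 = idm l"
  shows "unitary_htp l X B F (\<lambda>x. mmult l (mmult l (R 1) (F x)) (madj (R 1)))"
proof -
  define H where "H = (\<lambda>p. mmult l (mmult l (R (fst p)) (F (snd p))) (madj (R (fst p))))"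
  have "mcont ({0..1} \<times> X) (\<lambda>p. R (fst p))"
    using R(1) by (rule mcont_compose) (auto intro: continuous_on_fst)
  moreover have "mcont X F"
    using F by (simp add: unitary_map_def)
  then have "mcont ({0..1} \<times> X) (\<lambda>p. F (snd p))"
    by (rule mcont_compose) (auto intro: continuous_on_snd)
  ultimately have "mcont ({0..1} \<times> X) H"
    unfolding H_def by (intro mcont_mmult mcont_madj)
  moreover have "unitary_mat l (H p)" if "p \<in> {0..1} \<times> X" for p
    using that F R(2) unfolding H_def unitary_map_def by (auto intro!: unitary_mmult unitary_madj)
  moreover have "H p = idm l" if "p \<in> {0..1} \<times> B" for p
  proof -
    have "unitary_mat l (R (fst p))" and "F (snd p) = idm l"
      using that R(2) F unfolding unitary_map_def by auto
    then show ?thesis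
      unfolding H_def by (simp add: mmult_idm_right unitary_is_mat unitary_mat_iff)
  qed
  moreover have "H (0, x) = F x" if "x \<in> X" for x
    using that F R(3) unfolding H_def unitary_map_def
    by (simp add: mmult_idm_left mmult_idm_right unitary_is_mat)
  ultimately show ?thesis
    unfolding unitary_htp_def unitary_map_def by (intro exI[of _ H]) (simp add: H_def)
qed

lemma unitary_htp_block_at_corner:
  assumes n: "0 < n" and p: "p < a" and l: "n * a \<le> l" and A: "unitary_map n X B A"
  shows "unitary_htp l X B (\<lambda>x. block_at n l a p (A x)) (\<lambda>x. corner n l (A x))"
proof -
  have "n \<le> n * a"
    using p by simp
  then have "n \<le> l"
    using l by linarith
  then have A': "unitary_map l X B (\<lambda>x. corner n l (A x))"
    by (rule unitary_map_corner[OF A n])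
  show ?thesis
  proof (cases "p = 0")
    case True
    then show ?thesis
      using unitary_htp_refl[OF A'] corner_eq_block_at_0[OF n _ l] p by simp
  next
    case False
    let ?R = "swap_rot l (block_swap n p)"
    have bounded: "\<And>i. i < l \<Longrightarrow> block_swap n p i < l"
      using block_swap_less[OF n False p l] .
    have "unitary_htp l X B (\<lambda>x. corner n l (A x))
        (\<lambda>x. mmult l (mmult l (?R 1) (corner n l (A x))) (madj (?R 1)))"
      by (rule unitary_htp_conj_path[OF A'])
        (simp_all add: mcont_swap_rot swap_rot_0 unitary_swap_rot[OF block_swap_block_swap[OF n False] bounded])
    then show ?thesis
      by (rule unitary_htp_sym[OF unitary_htp_cong]) (simp_all add: swap_rot_conj_corner n False p l)
  qed
qed

lemma unitary_htp_mprod: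
  assumes "\<And>p. p < m \<Longrightarrow> unitary_htp k X B (F p) (G p)"
  shows "unitary_htp k X B (\<lambda>x. mprod k (\<lambda>p. F p x) m) (\<lambda>x. mprod k (\<lambda>p. G p x) m)"
  using assms
proof (induction m)
  case 0
  then show ?case
    using unitary_htp_refl[OF unitary_map_idm] by simp
next
  case (Suc m)
  then show ?case
    by (simp add: unitary_htp_mmult)
qed

lemma unitary_htp_blockdiag_mprod_corner:
  assumes n: "0 < n" and l: "n * a \<le> l" and A: "\<And>p. p < a \<Longrightarrow> unitary_map n X B (A p)"
  shows "unitary_htp l X B (\<lambda>x. blockdiag n l a (\<lambda>p. A p x)) (\<lambda>x. mprod l (\<lambda>p. corner n l (A p x)) a)"
proof -
  have "blockdiag n l a (\<lambda>p. A p x) = mprod l (\<lambda>p. block_at n l a p (A p x)) a" if "x \<in> X" for x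
    using that A unitary_is_mat by (intro blockdiag_eq_mprod_block_at[OF l n]) (auto simp: unitary_map_def)
  moreover have "unitary_htp l X B (\<lambda>x. mprod l (\<lambda>p. block_at n l a p (A p x)) a)
      (\<lambda>x. mprod l (\<lambda>p. corner n l (A p x)) a)"
    using unitary_htp_block_at_corner[OF n _ l A] by (rule unitary_htp_mprod)
  ultimately show ?thesis
    by (auto elim: unitary_htp_cong)
qed

section \<open>Parametrising the circle by turns\<close>

definition turn :: "real \<Rightarrow> complex" where
  "turn \<phi> = exp (2 * of_real pi * \<i> * of_real \<phi>)"

definition turn_arg :: "complex \<Rightarrow> real" where
  "turn_arg z = Arg2pi z / (2 * pi)"

lemma norm_turn [simp]: "norm (turn \<phi>) = 1"
  by (simp add: turn_def)

lemma turn_in_circle: "turn \<phi> \<in> circle"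
  by simp

lemma turn_add: "turn (\<phi> + \<psi>) = turn \<phi> * turn \<psi>"
  by (simp add: turn_def distrib_left exp_add)

lemma turn_0 [simp]: "turn 0 = 1"
  by (simp add: turn_def)

lemma turn_Ints: "k \<in> \<int> \<Longrightarrow> turn k = 1"
  by (auto elim!: Ints_cases simp: turn_def cis_conv_exp[symmetric] cis_multiple_2pi algebra_simps)

lemma turn_1 [simp]: "turn 1 = 1"
  by (simp add: turn_Ints)

lemma turn_add_Ints: "k \<in> \<int> \<Longrightarrow> turn (\<phi> + k) = turn \<phi>"
  by (simp add: turn_add turn_Ints)

lemma turn_turn_arg:
  assumes "z \<in> circle"
  shows "turn (turn_arg z) = z"
proof -
  have "z = exp (\<i> * of_real (Arg2pi z))"
    using Arg2pi[of z] assms by (simp add: is_Arg_def)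
  then show ?thesis
    by (simp add: turn_def turn_arg_def field_simps)
qed

lemma turn_arg_bounds: "0 \<le> turn_arg z" "turn_arg z < 1"
  using Arg2pi[of z] by (auto simp: turn_arg_def field_simps)

lemma turn_arg_turn:
  assumes "0 \<le> \<phi>" and "\<phi> < 1"
  shows "turn_arg (turn \<phi>) = \<phi>"
proof -
  have "Arg2pi (turn \<phi>) = 2 * pi * \<phi>"
    by (rule Arg2pi_unique[of 1]) (use assms in \<open>auto simp: turn_def algebra_simps\<close>)
  then show ?thesis
    by (simp add: turn_arg_def)
qed

lemma turn_arg_1 [simp]: "turn_arg 1 = 0"
  by (simp add: turn_arg_def Arg2pi_of_real[of 1, simplified])

lemma continuous_on_turn [continuous_intros]: "continuous_on S f \<Longrightarrow> continuous_on S (\<lambda>x. turn (f x))"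
  unfolding turn_def by (intro continuous_intros)

lemma circlepath_0_1: "circlepath 0 1 = turn"
  by (simp add: circlepath turn_def fun_eq_iff)

text \<open>\<open>turn_arg\<close> jumps at \<open>1\<close>, so continuity in the circle variable is obtained from the
  parameter interval through the quotient map \<open>turn\<close> from \<open>[0, 1]\<close> onto the circle.\<close>

lemma continuous_on_circle_via_turn:
  fixes G :: "real \<times> 'a::t2_space \<times> complex \<Rightarrow> complex"
  assumes K: "compact K"
    and G: "continuous_on ({0..1} \<times> K \<times> {0..1}) (\<lambda>(t, s, \<phi>). G (t, s, turn \<phi>))"
  shows "continuous_on ({0..1} \<times> K \<times> circle) G"
proof -
  define f :: "real \<times> 'a \<times> real \<Rightarrow> real \<times> 'a \<times> complex" where "f = (\<lambda>(t, s, \<phi>). (t, s, turn \<phi>))"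
  let ?S = "{0..1::real} \<times> K \<times> {0..1::real}"
  let ?T = "{0..1::real} \<times> K \<times> circle"
  have f: "continuous_on ?S f"
    unfolding f_def by (auto simp: case_prod_unfold intro!: continuous_intros)
  have f_image: "f ` ?S = ?T"
  proof
    show "f ` ?S \<subseteq> ?T"
      using turn_in_circle by (auto simp: f_def)
    show "?T \<subseteq> f ` ?S"
    proof
      fix x
      assume "x \<in> ?T"
      then obtain t s z where x: "x = (t, s, z)" "t \<in> {0..1}" "s \<in> K" "z \<in> circle"
        by auto
      then have "x = f (t, s, turn_arg z)"
        by (simp add: f_def turn_turn_arg)
      moreover have "(t, s, turn_arg z) \<in> ?S"
        using x turn_arg_bounds[of z] by auto
      ultimately show "x \<in> f ` ?S"
        by blast
    qed
  qed
  have "compact ?S"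
    using K by (intro compact_Times compact_Icc)
  note quotient = Abstract_Topology_2.continuous_imp_quotient_map[OF f f_image this]
  have Gf: "(\<lambda>(t, s, \<phi>). G (t, s, turn \<phi>)) = G \<circ> f"
    by (auto simp: f_def fun_eq_iff)
  show ?thesis
    unfolding continuous_openin_preimage_eq
  proof (intro allI impI)
    fix V :: "complex set"
    assume "open V"
    then have "openin (top_of_set ?S) (?S \<inter> (G \<circ> f) -` V)"
      using G unfolding Gf continuous_openin_preimage_eq by blast
    moreover have "?S \<inter> (G \<circ> f) -` V = ?S \<inter> f -` (?T \<inter> G -` V)"
      using f_image by auto
    ultimately show "openin (top_of_set ?T) (?T \<inter> G -` V)"
      using quotient[of "?T \<inter> G -` V"] by simp
  qed
qed

section \<open>Reparametrising the circle variable\<close>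

definition loop_lift :: "(real \<Rightarrow> real) \<Rightarrow> bool" where
  "loop_lift h \<longleftrightarrow> continuous_on {0..1} h \<and> h 0 = 0 \<and> h 1 \<in> \<int>"

text \<open>\<open>reparam y h\<close> precomposes \<open>y\<close>, in the circle variable, with the based circle map of degree
  \<open>h 1\<close> that lifts to \<open>h\<close>.\<close>

definition reparam :: "('v \<times> complex \<Rightarrow> cmat) \<Rightarrow> (real \<Rightarrow> real) \<Rightarrow> 'v \<times> complex \<Rightarrow> cmat" where
  "reparam y h x = y (fst x, turn (h (turn_arg (snd x))))"

lemma loop_lift_sum: "(\<And>p. p < m \<Longrightarrow> loop_lift (h p)) \<Longrightarrow> loop_lift (\<lambda>\<phi>. \<Sum>p<m. h p \<phi>)"
  unfolding loop_lift_def by (auto intro!: continuous_on_sum Ints_sum)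

lemma loop_lift_linear: "c \<in> \<int> \<Longrightarrow> loop_lift (\<lambda>\<phi>. c * \<phi>)"
  by (auto simp: loop_lift_def intro!: continuous_intros)

context
  fixes e :: "'v::euclidean_space" and y :: "'v \<times> complex \<Rightarrow> cmat" and n :: nat
  assumes e: "e \<in> sphere 0 1" and y: "unitary_map n (sphere 0 1 \<times> circle) (cs_base e) y"
begin

lemma mcont_via_turn:
  fixes H :: "real \<times> 'v \<times> complex \<Rightarrow> cmat" and k :: "real \<times> 'v \<times> real \<Rightarrow> real"
  assumes k: "continuous_on ({0..1} \<times> sphere 0 1 \<times> {0..1}) k"
    and H: "\<And>t s \<phi>. t \<in> {0..1} \<Longrightarrow> s \<in> sphere 0 1 \<Longrightarrow> \<phi> \<in> {0..1} \<Longrightarrow>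
      H (t, s, turn \<phi>) = y (s, turn (k (t, s, \<phi>)))"
  shows "mcont ({0..1} \<times> sphere 0 1 \<times> circle) H"
  unfolding mcont_def
proof (intro allI)
  fix i j
  have "continuous_on (sphere 0 1 \<times> circle) (\<lambda>x. y x i j)"
    using y by (simp add: unitary_map_def mcont_def)
  then have "continuous_on ({0..1} \<times> sphere 0 1 \<times> {0..1}) (\<lambda>q. y (fst (snd q), turn (k q)) i j)"
    by (rule continuous_on_compose2[where f = "\<lambda>q. (fst (snd q), turn (k q))"])
      (auto intro!: continuous_intros k simp: turn_in_circle)
  then have "continuous_on ({0..1} \<times> sphere 0 1 \<times> {0..1}) (\<lambda>(t, s, \<phi>). H (t, s, turn \<phi>) i j)"
    by (rule continuous_on_cong[THEN iffD1, rotated 2]) (auto simp: H)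
  then show "continuous_on ({0..1} \<times> sphere 0 1 \<times> circle) (\<lambda>x. H x i j)"
    by (rule continuous_on_circle_via_turn[OF compact_sphere])
qed

lemma unitary_htp_reparam:
  assumes h: "loop_lift h" and g: "loop_lift g" and "h 1 = g 1"
  shows "unitary_htp n (sphere 0 1 \<times> circle) (cs_base e) (reparam y h) (reparam y g)"
proof -
  define k where "k = (\<lambda>(t, \<phi>). (1 - t) * h \<phi> + t * g \<phi>)"
  have k1: "turn (k (t, 1)) = 1" for t
    using assms unfolding k_def loop_lift_def by (simp add: algebra_simps turn_Ints)
  have k0: "k (t, 0) = 0" for t
    using h g by (simp add: k_def loop_lift_def)
  define H where "H = (\<lambda>q :: real \<times> 'v \<times> complex. y (fst (snd q), turn (k (fst q, turn_arg (snd (snd q))))))"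
  have "mcont ({0..1} \<times> sphere 0 1 \<times> circle) H"
  proof (rule mcont_via_turn)
    have "continuous_on {0..1} h" "continuous_on {0..1} g"
      using h g by (simp_all add: loop_lift_def)
    then show "continuous_on ({0..1} \<times> sphere 0 1 \<times> {0..1}) (\<lambda>q. k (fst q, snd (snd q)))"
      unfolding k_def
      by (auto intro!: continuous_intros continuous_on_compose2[of "{0..1}" h] continuous_on_compose2[of "{0..1}" g])
    fix t s \<phi>
    assume "\<phi> \<in> {0..1::real}"
    then show "H (t, s, turn \<phi>) = y (s, turn (k (fst (t, s, \<phi>), snd (snd (t, s, \<phi>)))))"
      using k0 k1 by (cases "\<phi> = 1") (auto simp: H_def turn_arg_turn)
  qed
  moreover have "unitary_mat n (H q)" if "q \<in> {0..1} \<times> sphere 0 1 \<times> circle" for q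
  proof -
    have "(fst (snd q), turn (k (fst q, turn_arg (snd (snd q))))) \<in> sphere 0 1 \<times> circle"
      using that by auto
    then show ?thesis
      using y unfolding H_def unitary_map_def by blast
  qed
  moreover have "H q = idm n" if "q \<in> {0..1} \<times> cs_base e" for q
  proof -
    have "(fst (snd q), turn (k (fst q, turn_arg (snd (snd q))))) \<in> cs_base e"
      using that k0 by auto
    then show ?thesis
      using y unfolding H_def unitary_map_def by blast
  qed
  moreover have "H (0, x) = reparam y h x" "H (1, x) = reparam y g x" for x
    by (simp_all add: H_def k_def reparam_def)
  ultimately show ?thesis
    unfolding unitary_htp_def unitary_map_def by (intro exI[of _ H]) simp
qed

lemma cs_base_subset: "cs_base e \<subseteq> sphere 0 1 \<times> circle"
  using e by auto

lemma unitary_map_reparam: "loop_lift h \<Longrightarrow> unitary_map n (sphere 0 1 \<times> circle) (cs_base e) (reparam y h)"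
  using unitary_htp_imp_unitary_map[OF unitary_htp_reparam cs_base_subset] by blast

lemma reparam_0: "x \<in> sphere 0 1 \<times> circle \<Longrightarrow> reparam y (\<lambda>\<phi>. 0) x = idm n"
  using y by (auto simp: reparam_def unitary_map_def)

lemma reparam_id: "x \<in> sphere 0 1 \<times> circle \<Longrightarrow> reparam y (\<lambda>\<phi>. \<phi>) x = y x"
  by (auto simp: reparam_def turn_turn_arg)

text \<open>Reparametrise \<open>f\<close> and \<open>g\<close> to run on \<open>[0, 1/2]\<close> and \<open>[1/2, 1]\<close>: at every point one factor
  of the product is then the identity, so the product is a single reparametrisation.\<close>

lemma unitary_htp_reparam_add:
  assumes f: "loop_lift f" and g: "loop_lift g"
  shows "unitary_htp n (sphere 0 1 \<times> circle) (cs_base e)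
    (\<lambda>x. mmult n (reparam y f x) (reparam y g x)) (reparam y (\<lambda>\<phi>. f \<phi> + g \<phi>))"
proof -
  define r1 where "r1 = (\<lambda>\<phi>::real. min (2 * \<phi>) 1)"
  define r2 where "r2 = (\<lambda>\<phi>::real. max (2 * \<phi> - 1) 0)"
  have "continuous_on {0..1} r1" "r1 ` {0..1} \<subseteq> {0..1}"
    "continuous_on {0..1} r2" "r2 ` {0..1} \<subseteq> {0..1}"
    unfolding r1_def r2_def by (auto intro!: continuous_intros)
  then have f1: "loop_lift (\<lambda>\<phi>. f (r1 \<phi>))" and g2: "loop_lift (\<lambda>\<phi>. g (r2 \<phi>))"
    using f g by (auto simp: loop_lift_def r1_def r2_def intro: continuous_on_compose2)
  have split: "unitary_htp n (sphere 0 1 \<times> circle) (cs_base e)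
      (\<lambda>x. mmult n (reparam y f x) (reparam y g x))
      (\<lambda>x. mmult n (reparam y (\<lambda>\<phi>. f (r1 \<phi>)) x) (reparam y (\<lambda>\<phi>. g (r2 \<phi>)) x))"
    by (intro unitary_htp_mmult unitary_htp_reparam f g f1 g2) (simp_all add: r1_def r2_def)
  have pointwise: "mmult n (reparam y (\<lambda>\<phi>. f (r1 \<phi>)) x) (reparam y (\<lambda>\<phi>. g (r2 \<phi>)) x) =
      reparam y (\<lambda>\<phi>. f (r1 \<phi>) + g (r2 \<phi>)) x" if x: "x \<in> sphere 0 1 \<times> circle" for x
  proof -
    obtain s z where sz: "x = (s, z)" "s \<in> sphere 0 1"
      using x by auto
    have unitary: "unitary_mat n (y (s, turn \<psi>))" for \<psi>
      using y sz by (simp add: unitary_map_def)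
    have one: "y (s, 1) = idm n"
      using y sz by (simp add: unitary_map_def)
    show ?thesis
    proof (cases "2 * turn_arg z \<le> 1")
      case True
      then show ?thesis
        using g sz one unitary[THEN unitary_is_mat]
        by (simp add: reparam_def r1_def r2_def loop_lift_def mmult_idm_right)
    next
      case False
      have "f 1 \<in> \<int>"
        using f by (simp add: loop_lift_def)
      then have "turn (f 1) = 1" "turn (f 1 + \<psi>) = turn \<psi>" for \<psi>
        using turn_add_Ints[of "f 1" \<psi>] by (simp_all add: turn_Ints add.commute)
      then show ?thesis
        using False sz one unitary[THEN unitary_is_mat]
        by (simp add: reparam_def r1_def r2_def mmult_idm_left)
    qed
  qed
  have "unitary_htp n (sphere 0 1 \<times> circle) (cs_base e)
      (\<lambda>x. mmult n (reparam y f x) (reparam y g x)) (reparam y (\<lambda>\<phi>. f (r1 \<phi>) + g (r2 \<phi>)))"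
    using split by (rule unitary_htp_cong) (simp_all add: pointwise)
  also have "unitary_htp n (sphere 0 1 \<times> circle) (cs_base e) \<dots> (reparam y (\<lambda>\<phi>. f \<phi> + g \<phi>))"
    using f1 g2 f g by (intro unitary_htp_reparam) (auto simp: loop_lift_def r1_def r2_def intro!: continuous_intros)
  finally show ?thesis .
qed

lemma unitary_htp_mprod_reparam:
  assumes "\<And>p. p < m \<Longrightarrow> loop_lift (h p)"
  shows "unitary_htp n (sphere 0 1 \<times> circle) (cs_base e)
    (\<lambda>x. mprod n (\<lambda>p. reparam y (h p) x) m) (reparam y (\<lambda>\<phi>. \<Sum>p<m. h p \<phi>))"
  using assms
proof (induction m)
  case 0
  show ?case
    using unitary_htp_refl[OF unitary_map_idm] by (rule unitary_htp_cong) (simp_all add: reparam_0)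
next
  case (Suc m)
  then have "loop_lift (h m)" and "loop_lift (\<lambda>\<phi>. \<Sum>p<m. h p \<phi>)"
    by (auto intro: loop_lift_sum)
  then have "unitary_htp n (sphere 0 1 \<times> circle) (cs_base e)
      (\<lambda>x. mmult n (reparam y (h m) x) (reparam y (\<lambda>\<phi>. \<Sum>p<m. h p \<phi>) x))
      (reparam y (\<lambda>\<phi>. h m \<phi> + (\<Sum>p<m. h p \<phi>)))"
    by (rule unitary_htp_reparam_add)
  moreover have "unitary_htp n (sphere 0 1 \<times> circle) (cs_base e)
      (\<lambda>x. mprod n (\<lambda>p. reparam y (h p) x) (Suc m))
      (\<lambda>x. mmult n (reparam y (h m) x) (reparam y (\<lambda>\<phi>. \<Sum>p<m. h p \<phi>) x))"
    using Suc by (auto intro!: unitary_htp_mmult unitary_htp_refl unitary_map_reparam)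
  ultimately show ?case
    by (simp add: unitary_htp_trans add.commute)
qed

lemma unitary_htp_reparam_mpow:
  "unitary_htp n (sphere 0 1 \<times> circle) (cs_base e) (reparam y (\<lambda>\<phi>. real m * \<phi>)) (\<lambda>x. mpow n (y x) m)"
proof -
  have "unitary_htp n (sphere 0 1 \<times> circle) (cs_base e)
      (\<lambda>x. mprod n (\<lambda>p. reparam y (\<lambda>\<phi>. \<phi>) x) m) (reparam y (\<lambda>\<phi>. \<Sum>p<m. \<phi>))"
    by (rule unitary_htp_mprod_reparam) (simp add: loop_lift_linear[of 1, simplified])
  then show ?thesis
    by (rule unitary_htp_sym[OF unitary_htp_cong]) (simp_all add: mprod_const reparam_id)
qed

lemma unitary_htp_reparam_mpow_madj:
  "unitary_htp n (sphere 0 1 \<times> circle) (cs_base e) (reparam y (\<lambda>\<phi>. - real m * \<phi>)) (\<lambda>x. mpow n (madj (y x)) m)"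
proof -
  let ?P = "reparam y (\<lambda>\<phi>. - real m * \<phi>)" and ?Q = "reparam y (\<lambda>\<phi>. real m * \<phi>)"
  let ?Z = "\<lambda>x. mpow n (madj (y x)) m"
  have lifts: "loop_lift (\<lambda>\<phi>. - real m * \<phi>)" "loop_lift (\<lambda>\<phi>. real m * \<phi>)"
    by (rule loop_lift_linear, simp)+
  have P: "unitary_map n (sphere 0 1 \<times> circle) (cs_base e) ?P"
    by (rule unitary_map_reparam[OF lifts(1)])
  have "unitary_htp n (sphere 0 1 \<times> circle) (cs_base e)
      (\<lambda>x. mmult n (?P x) (mpow n (y x) m)) (\<lambda>x. mmult n (?P x) (?Q x))"
    by (rule unitary_htp_mmult[OF unitary_htp_refl[OF P] unitary_htp_sym[OF unitary_htp_reparam_mpow]])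
  also have "unitary_htp n (sphere 0 1 \<times> circle) (cs_base e) \<dots> (reparam y (\<lambda>\<phi>. 0))"
    using unitary_htp_reparam_add[OF lifts] by simp
  finally have "unitary_htp n (sphere 0 1 \<times> circle) (cs_base e)
      (\<lambda>x. mmult n (mmult n (?P x) (mpow n (y x) m)) (?Z x)) (\<lambda>x. mmult n (reparam y (\<lambda>\<phi>. 0) x) (?Z x))"
    using unitary_htp_refl[OF unitary_map_mpow[OF unitary_map_madj[OF y]]] by (rule unitary_htp_mmult)
  then show ?thesis
  proof (rule unitary_htp_cong)
    fix x :: "'v \<times> complex"
    assume x: "x \<in> sphere 0 1 \<times> circle"
    then have "unitary_mat n (y x)" and "is_mat n (?P x)"
      using y P by (auto simp: unitary_map_def unitary_is_mat)
    then show "mmult n (mmult n (?P x) (mpow n (y x) m)) (?Z x) = ?P x"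
      by (simp add: mmult_assoc mpow_mult_mpow_madj mmult_idm_right)
    show "mmult n (reparam y (\<lambda>\<phi>. 0) x) (?Z x) = ?Z x"
      using x by (simp add: reparam_0 mmult_idm_left)
  qed
qed

lemma unitary_htp_reparam_mzpow:
  "unitary_htp n (sphere 0 1 \<times> circle) (cs_base e) (reparam y (\<lambda>\<phi>. of_int b * \<phi>)) (\<lambda>x. mzpow n (y x) b)"
proof (cases "0 \<le> b")
  case True
  then obtain m where "b = int m"
    by (metis nonneg_eq_int)
  then show ?thesis
    using unitary_htp_reparam_mpow[of m] by (simp add: mzpow_def)
next
  case False
  then obtain m where "b = - int m"
    by (metis nonneg_eq_int neg_0_le_iff_le nle_le minus_minus)
  then show ?thesis
    using unitary_htp_reparam_mpow_madj[of m] False by (simp add: mzpow_def)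
qed

lemma unitary_htp_mprod_reparam_mzpow:
  assumes "\<And>p. p < m \<Longrightarrow> loop_lift (h p)" and "\<And>p. p < m \<Longrightarrow> h p 1 = of_int (k p)"
  shows "unitary_htp n (sphere 0 1 \<times> circle) (cs_base e)
    (\<lambda>x. mprod n (\<lambda>p. reparam y (h p) x) m) (\<lambda>x. mzpow n (y x) (\<Sum>p<m. k p))"
proof -
  have "unitary_htp n (sphere 0 1 \<times> circle) (cs_base e)
      (\<lambda>x. mprod n (\<lambda>p. reparam y (h p) x) m) (reparam y (\<lambda>\<phi>. \<Sum>p<m. h p \<phi>))"
    by (rule unitary_htp_mprod_reparam[OF assms(1)])
  also have "unitary_htp n (sphere 0 1 \<times> circle) (cs_base e) \<dots>
      (reparam y (\<lambda>\<phi>. of_int (\<Sum>p<m. k p) * \<phi>))"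
    using assms by (intro unitary_htp_reparam loop_lift_sum loop_lift_linear) auto
  also have "unitary_htp n (sphere 0 1 \<times> circle) (cs_base e) \<dots> (\<lambda>x. mzpow n (y x) (\<Sum>p<m. k p))"
    by (rule unitary_htp_reparam_mzpow)
  finally show ?thesis .
qed

end

lemma circle_map_loop:
  fixes lam :: "complex \<Rightarrow> complex"
  assumes cont: "continuous_on circle lam" and into: "lam ` circle \<subseteq> circle"
  shows "path (lam \<circ> circlepath 0 1)" and "path_image (lam \<circ> circlepath 0 1) \<subseteq> circle"
    and "winding_number (lam \<circ> circlepath 0 1) 0 = of_int (wind lam)"
proof -
  let ?g = "lam \<circ> circlepath 0 1"
  have g: "?g = (\<lambda>t. lam (turn t))"
    by (simp add: circlepath_0_1 comp_def)
  show path: "path ?g"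
    unfolding g path_def
    by (rule continuous_on_compose2[OF cont]) (auto intro!: continuous_intros simp: turn_in_circle)
  show image: "path_image ?g \<subseteq> circle"
    unfolding g path_image_def using into turn_in_circle by auto
  have "0 \<notin> path_image ?g"
    using image by auto
  moreover have "pathfinish ?g = pathstart ?g"
    unfolding g pathfinish_def pathstart_def by simp
  ultimately obtain k :: int where k: "winding_number ?g 0 = of_int k"
    using integer_winding_number_eq[OF path] by (metis Ints_cases)
  moreover have "wind lam = k"
    unfolding wind_def by (rule the_equality) (use k in auto)
  ultimately show "winding_number ?g 0 = of_int (wind lam)"
    by simp
qed

lemma circle_map_lift:
  fixes lam :: "complex \<Rightarrow> complex"
  assumes cont: "continuous_on circle lam" and into: "lam ` circle \<subseteq> circle" and based: "lam 1 = 1"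
  obtains h where "loop_lift h" and "h 1 = of_int (wind lam)"
    and "\<And>\<phi>. \<phi> \<in> {0..1} \<Longrightarrow> lam (turn \<phi>) = turn (h \<phi>)"
proof -
  let ?g = "lam \<circ> circlepath 0 1"
  note loop = circle_map_loop[OF cont into]
  have nonzero: "0 \<notin> path_image ?g"
    using loop(2) by auto
  obtain q where q: "path q" "pathfinish q - pathstart q = 2 * of_real pi * \<i> * of_int (wind lam)"
      "\<And>t. t \<in> {0..1} \<Longrightarrow> lam (turn t) = exp (q t)"
    using winding_number_as_continuous_log[OF loop(1) nonzero] loop(3) by (auto simp: circlepath_0_1)
  have q_imag: "q t = \<i> * of_real (Im (q t))" if "t \<in> {0..1}" for t
  proof -
    have "norm (exp (q t)) = 1"
      using q(3)[OF that] into turn_in_circle by (metis image_subset_iff mem_sphere_0)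
    then show ?thesis
      by (simp add: complex_eq_iff)
  qed
  have "exp (q 0) = 1"
    using q(3)[of 0] by (simp add: based)
  define h where "h t = (Im (q t) - Im (q 0)) / (2 * pi)" for t
  show ?thesis
  proof
    have "Im (q 1 - q 0) = 2 * pi * of_int (wind lam)"
      using q(2) by (simp add: pathfinish_def pathstart_def)
    then show h1: "h 1 = of_int (wind lam)"
      by (simp add: h_def)
    have "continuous_on {0..1} q"
      using q(1) by (simp add: path_def)
    then have "continuous_on {0..1} h"
      unfolding h_def by (intro continuous_intros) auto
    then show "loop_lift h"
      using h1 by (simp add: loop_lift_def h_def)
  next
    fix \<phi> :: real
    assume \<phi>: "\<phi> \<in> {0..1}"
    have "complex_of_real pi \<noteq> 0"
      by simp
    then have "2 * of_real pi * \<i> * of_real (h \<phi>) = \<i> * of_real (Im (q \<phi>)) - \<i> * of_real (Im (q 0))"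
      by (simp add: h_def field_simps)
    then have "turn (h \<phi>) = exp (q \<phi> - q 0)"
      using q_imag[OF \<phi>] q_imag[of 0] by (simp add: turn_def)
    then show "lam (turn \<phi>) = turn (h \<phi>)"
      using q(3)[OF \<phi>] \<open>exp (q 0) = 1\<close> by (simp add: exp_diff)
  qed
qed

lemma circle_map_lifts:
  fixes lam :: "nat \<Rightarrow> complex \<Rightarrow> complex" and a :: nat
  assumes "\<forall>p<a. continuous_on circle (lam p) \<and> lam p ` circle \<subseteq> circle \<and> lam p 1 = 1"
  obtains h where "\<And>p. p < a \<Longrightarrow> loop_lift (h p)" and "\<And>p. p < a \<Longrightarrow> h p 1 = of_int (wind (lam p))"
    and "\<And>p \<phi>. p < a \<Longrightarrow> \<phi> \<in> {0..1} \<Longrightarrow> lam p (turn \<phi>) = turn (h p \<phi>)"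
proof -
  have "\<exists>h. loop_lift h \<and> h 1 = of_int (wind (lam p)) \<and> (\<forall>\<phi>\<in>{0..1}. lam p (turn \<phi>) = turn (h \<phi>))"
    if "p < a" for p
  proof -
    have "continuous_on circle (lam p)" "lam p ` circle \<subseteq> circle" "lam p 1 = 1"
      using assms that by auto
    then show ?thesis
      by (rule circle_map_lift) blast
  qed
  then show ?thesis
    using that by metis
qed

section \<open>The two coordinates of the image under \<open>\<phi>\<close>\<close>

lemma pi_htp_xcoord_phi_u:
  fixes e :: "'v::euclidean_space"
  assumes n: "0 < n" and l: "n * a \<le> l" and lam: "\<forall>p<a. lam p 1 = 1" and U: "ct_map n e U"
  shows "pi_htp l e (xcoord (phi_u n l a lam U)) (\<lambda>s. mpow l (corner n l (xcoord U s)) a)"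
proof -
  have "mcont (sphere 0 1) (xcoord U)"
    using U unfolding ct_map_def xcoord_def
    by (rule mcont_compose[OF conjunct1]) (auto intro!: continuous_intros)
  then have "unitary_map n (sphere 0 1) {e} (xcoord U)"
    using U by (auto simp: unitary_map_def ct_map_def xcoord_def)
  then have "unitary_htp l (sphere 0 1) {e} (\<lambda>s. blockdiag n l a (\<lambda>p. xcoord U s))
      (\<lambda>s. mprod l (\<lambda>p. corner n l (xcoord U s)) a)"
    by (intro unitary_htp_blockdiag_mprod_corner[OF n l])
  moreover have "xcoord (phi_u n l a lam U) = (\<lambda>s. blockdiag n l a (\<lambda>p. xcoord U s))"
    unfolding xcoord_def phi_u_eq_blockdiag using lam by (intro ext blockdiag_cong[OF n]) simp
  ultimately show ?thesis
    unfolding pi_htp_iff_unitary_htp by (simp add: mprod_const)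
qed

lemma unitary_map_ycoord:
  assumes U: "ct_map n e U" and e: "e \<in> sphere 0 1"
  shows "unitary_map n (sphere 0 1 \<times> circle) (cs_base e) (ycoord n U)"
proof -
  have U_cont: "mcont (sphere 0 1 \<times> circle) U"
    using U by (simp add: ct_map_def)
  then have "mcont (sphere 0 1 \<times> circle) (\<lambda>x. U (fst x, 1))"
    by (rule mcont_compose) (auto intro!: continuous_intros)
  then have "mcont (sphere 0 1 \<times> circle) (ycoord n U)"
    using U_cont unfolding ycoord_def case_prod_beta prod.collapse by (intro mcont_mmult mcont_madj)
  moreover have "unitary_mat n (ycoord n U (s, z))" if "s \<in> sphere 0 1" "z \<in> circle" for s z
    using that U by (auto simp: ycoord_def ct_map_def intro!: unitary_mmult unitary_madj)
  moreover have "ycoord n U (s, 1) = idm n" if "s \<in> sphere 0 1" for s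
    using that U by (simp add: ycoord_def ct_map_def unitary_mat_iff)
  moreover have "ycoord n U (e, z) = idm n" if "z \<in> circle" for z
    using that U e by (simp add: ycoord_def ct_map_def mmult_idm_left)
  ultimately show ?thesis
    by (auto simp: unitary_map_def)
qed

lemma ycoord_phi_u:
  assumes "0 < n" and "n * a \<le> l" and "\<forall>p<a. lam p 1 = 1"
  shows "ycoord l (phi_u n l a lam U) (s, z) = blockdiag n l a (\<lambda>p. ycoord n U (s, lam p z))"
proof -
  have "ycoord l (phi_u n l a lam U) (s, z) =
      blockdiag n l a (\<lambda>p. mmult n (U (s, lam p z)) (madj (U (s, lam p 1))))"
    using assms by (simp add: ycoord_def phi_u_eq_blockdiag madj_blockdiag mmult_blockdiag)
  also have "\<dots> = blockdiag n l a (\<lambda>p. ycoord n U (s, lam p z))"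
    using assms by (intro blockdiag_cong) (simp_all add: ycoord_def)
  finally show ?thesis .
qed

lemma cs_htp_ycoord_phi_u:
  fixes e :: "'v::euclidean_space"
  assumes n: "0 < n" and a: "0 < a" and l: "n * a \<le> l"
    and lam: "\<forall>p<a. continuous_on circle (lam p) \<and> lam p ` circle \<subseteq> circle \<and> lam p 1 = 1"
    and e: "e \<in> sphere 0 1" and U: "ct_map n e U"
  shows "cs_htp l e (ycoord l (phi_u n l a lam U))
    (\<lambda>x. mzpow l (corner n l (ycoord n U x)) (\<Sum>p<a. wind (lam p)))"
proof -
  let ?D = "sphere (0::'v) 1 \<times> circle" and ?y = "ycoord n U" and ?b = "\<Sum>p<a. wind (lam p)"
  have "n \<le> n * a"
    using a by simp
  then have "n \<le> l"
    using l by linarith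
  have y: "unitary_map n ?D (cs_base e) ?y"
    by (rule unitary_map_ycoord[OF U e])
  obtain h where h: "\<And>p. p < a \<Longrightarrow> loop_lift (h p)" "\<And>p. p < a \<Longrightarrow> h p 1 = of_int (wind (lam p))"
    "\<And>p \<phi>. p < a \<Longrightarrow> \<phi> \<in> {0..1} \<Longrightarrow> lam p (turn \<phi>) = turn (h p \<phi>)"
    using circle_map_lifts[OF lam] by blast
  have blocks: "ycoord l (phi_u n l a lam U) x = blockdiag n l a (\<lambda>p. reparam ?y (h p) x)"
    if "x \<in> ?D" for x
  proof -
    from \<open>x \<in> ?D\<close> obtain s z where x: "x = (s, z)" "z \<in> circle"
      by auto
    have "ycoord l (phi_u n l a lam U) x = blockdiag n l a (\<lambda>p. ?y (s, lam p z))"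
      using x lam by (simp add: ycoord_phi_u[OF n l])
    also have "\<dots> = blockdiag n l a (\<lambda>p. reparam ?y (h p) x)"
    proof (rule blockdiag_cong[OF n])
      fix p
      assume "p < a"
      then show "?y (s, lam p z) = reparam ?y (h p) x"
        using x h(3)[of p "turn_arg z"] turn_arg_bounds[of z] by (simp add: reparam_def turn_turn_arg)
    qed
    finally show ?thesis .
  qed
  have "unitary_htp l ?D (cs_base e) (\<lambda>x. blockdiag n l a (\<lambda>p. reparam ?y (h p) x))
      (\<lambda>x. corner n l (mprod n (\<lambda>p. reparam ?y (h p) x) a))"
    using unitary_htp_blockdiag_mprod_corner[OF n l unitary_map_reparam[OF e y h(1)]]
    by (simp add: mprod_corner[OF n \<open>n \<le> l\<close>])
  also have "unitary_htp l ?D (cs_base e) \<dots> (\<lambda>x. corner n l (mzpow n (?y x) ?b))"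
    by (rule unitary_htp_corner[OF unitary_htp_mprod_reparam_mzpow[OF e y h(1,2)] n \<open>n \<le> l\<close>])
  finally show ?thesis
    unfolding cs_htp_iff_unitary_htp[OF e]
    by (rule unitary_htp_cong) (simp_all add: blocks corner_mzpow[OF n \<open>n \<le> l\<close>])
qed

theorem proposition4p2:
  fixes n l a :: nat
    and lam :: "nat \<Rightarrow> complex \<Rightarrow> complex"
    and e :: "'v::euclidean_space"
    and U :: "'v \<times> complex \<Rightarrow> cmat"
  assumes "n \<ge> 1" and "l \<ge> 1" and "a \<ge> 1" and "n * a \<le> l"
    and "\<forall>p<a. continuous_on circle (lam p) \<and> lam p ` circle \<subseteq> circle \<and> lam p 1 = 1"
    and "DIM('v) \<ge> 2"
    and "e \<in> sphere 0 1"
    and "ct_map n e U"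
  shows "pi_rat_eq l e (xcoord (phi_u n l a lam U))
            (\<lambda>s. mpow l (corner n l (xcoord U s)) a)
       \<and> cs_rat_eq l e (ycoord l (phi_u n l a lam U))
            (\<lambda>x. mzpow l (corner n l (ycoord n U x)) (\<Sum>p<a. wind (lam p)))"
proof
  have n: "0 < n" and a: "0 < a"
    using assms(1,3) by simp_all
  have "\<forall>p<a. lam p 1 = 1"
    using assms(5) by simp
  then show "pi_rat_eq l e (xcoord (phi_u n l a lam U)) (\<lambda>s. mpow l (corner n l (xcoord U s)) a)"
    by (intro pi_htp_imp_pi_rat_eq pi_htp_xcoord_phi_u[OF n assms(4) _ assms(8)])
  show "cs_rat_eq l e (ycoord l (phi_u n l a lam U))
      (\<lambda>x. mzpow l (corner n l (ycoord n U x)) (\<Sum>p<a. wind (lam p)))"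
    by (intro cs_htp_imp_cs_rat_eq[OF assms(7)] cs_htp_ycoord_phi_u[OF n a assms(4,5,7,8)])
qed

end
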